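(* Let $c:\mathbb{R}^d\times\mathbb{R}^d\to\mathbb{R}$ be continuous and let $\mu,\nu$ be probability measures on $\mathbb{R}^d$ with compact support, absolutely continuous with respect to Lebesgue measure, with $\int\log\frac{d\mu}{d\mathcal L^d}\,d\mu<\infty$ and $\int\log\frac{d\nu}{d\mathcal L^d}\,d\nu<\infty$. Let $W_c(\mu,\nu)=\min_{\gamma\in\Pi(\mu,\nu)}\int c\,d\gamma$ and $\mathcal O_c(\mu,\nu)$ the set of minimizers. Then, on $\Pi(\mu,\nu)$ with the narrow topology, the functionals $$H_\varepsilon(\gamma)=\frac1\varepsilon\Big(\int c\,d\gamma-W_c(\mu,\nu)\Big)+\operatorname{Ent}(\gamma\,|\,\mu\otimes\nu)$$ $\Gamma$-converge as $\varepsilon\to0$ to $H(\gamma)=\operatorname{Ent}(\gamma|\mu\otimes\nu)$ if $\gamma\in\mathcal O_c(\mu,\nu)$ and $H(\gamma)=+\infty$ otherwise.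
   Context: $\Pi(\mu,\nu)$ is the set of probability measures on $\mathbb{R}^d\times\mathbb{R}^d$ with marginals $\mu,\nu$. The relative entropy is $\operatorname{Ent}(\gamma|\rho)=\int\log\frac{d\gamma}{d\rho}\,d\gamma$ if $\gamma\ll\rho$, and $+\infty$ otherwise. $\Gamma$-convergence of $F_\varepsilon$ to $F$ means: for every $\gamma$ and every $\gamma_\varepsilon\to\gamma$, $\liminf F_\varepsilon(\gamma_\varepsilon)\ge F(\gamma)$; and for every $\gamma$ there exist $\gamma_\varepsilon\to\gamma$ with $\limsup F_\varepsilon(\gamma_\varepsilon)\le F(\gamma)$. *)

theory Defs
  imports "HOL-Probability.Probability"
begin

definition rel_ent :: "'b measure \<Rightarrow> 'b measure \<Rightarrow> ereal" where
  "rel_ent \<gamma> \<rho> =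
     (if absolutely_continuous \<rho> \<gamma> \<and> sets \<gamma> = sets \<rho>
      then enn2ereal (\<integral>\<^sup>+ x. ennreal (ln (enn2real (RN_deriv \<rho> \<gamma> x))) \<partial>\<gamma>)
         - enn2ereal (\<integral>\<^sup>+ x. ennreal (- ln (enn2real (RN_deriv \<rho> \<gamma> x))) \<partial>\<gamma>)
      else \<infinity>)"

definition couplings :: "'a::euclidean_space measure \<Rightarrow> 'a measure \<Rightarrow> ('a \<times> 'a) measure set" where
  "couplings \<mu> \<nu> = {\<gamma>. prob_space \<gamma> \<and> sets \<gamma> = sets borel \<and>
       distr \<gamma> borel fst = \<mu> \<and> distr \<gamma> borel snd = \<nu>}"

definition ot_cost :: "('a::euclidean_space \<times> 'a \<Rightarrow> real) \<Rightarrow> 'a measure \<Rightarrow> 'a measure \<Rightarrow> real" where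
  "ot_cost c \<mu> \<nu> = (INF \<gamma>\<in>couplings \<mu> \<nu>. \<integral> z. c z \<partial>\<gamma>)"

definition opt_couplings :: "('a::euclidean_space \<times> 'a \<Rightarrow> real) \<Rightarrow> 'a measure \<Rightarrow> 'a measure \<Rightarrow> ('a \<times> 'a) measure set" where
  "opt_couplings c \<mu> \<nu> = {\<gamma> \<in> couplings \<mu> \<nu>. (\<integral> z. c z \<partial>\<gamma>) = ot_cost c \<mu> \<nu>}"

definition narrow_conv :: "'i filter \<Rightarrow> ('i \<Rightarrow> 'b::topological_space measure) \<Rightarrow> 'b measure \<Rightarrow> bool" where
  "narrow_conv F \<gamma>s \<gamma> \<longleftrightarrow>
     (\<forall>f::'b \<Rightarrow> real. continuous_on UNIV f \<longrightarrow> bounded (range f) \<longrightarrow>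
        ((\<lambda>i. \<integral> z. f z \<partial>(\<gamma>s i)) \<longlongrightarrow> (\<integral> z. f z \<partial>\<gamma>)) F)"

definition gamma_conv_narrow ::
  "'b::topological_space measure set \<Rightarrow> (real \<Rightarrow> 'b measure \<Rightarrow> ereal) \<Rightarrow> ('b measure \<Rightarrow> ereal) \<Rightarrow> bool" where
  "gamma_conv_narrow X G G0 \<longleftrightarrow>
     (\<forall>\<gamma>\<in>X. \<forall>\<gamma>s. (\<forall>\<^sub>F e in at_right 0. \<gamma>s e \<in> X) \<longrightarrow> narrow_conv (at_right 0) \<gamma>s \<gamma> \<longrightarrow>
          Liminf (at_right 0) (\<lambda>e. G e (\<gamma>s e)) \<ge> G0 \<gamma>) \<and>
     (\<forall>\<gamma>\<in>X. \<exists>\<gamma>s. (\<forall>e>0. \<gamma>s e \<in> X) \<and> narrow_conv (at_right 0) \<gamma>s \<gamma> \<and>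
          Limsup (at_right 0) (\<lambda>e. G e (\<gamma>s e)) \<le> G0 \<gamma>)"

end

theory Submission
  imports Defs
begin

text \<open>
  The penalty \<open>(\<integral>c d\<gamma> - W\<^sub>c(\<mu>,\<nu>)) / \<epsilon>\<close> is nonnegative on couplings and vanishes exactly on
  optimal ones.  Since the marginals have compact support, \<open>c\<close> may be replaced on couplings by a
  bounded continuous cost, so \<open>\<gamma> \<mapsto> \<integral>c d\<gamma>\<close> is narrowly continuous: the constant family is a
  recovery sequence, and near a non-optimal coupling the penalty forces the functionals to \<open>\<infinity>\<close>.
  Near an optimal coupling the liminf inequality is the narrow lower semicontinuity of
  \<open>Ent(\<cdot>|\<mu>\<otimes>\<nu>)\<close>, which follows from the Donsker--Varadhan formula
  \<open>Ent(\<gamma>|\<rho>) = sup\<^sub>\<phi> \<integral>\<phi> d\<gamma> - ln \<integral>e\<^sup>\<phi> d\<rho>\<close> over bounded continuous \<open>\<phi>\<close>: Gibbs' inequality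
  gives \<open>\<le>\<close>, truncations of \<open>ln (d\<gamma>/d\<rho>)\<close> approach the supremum among bounded Borel \<open>\<phi>\<close>, and
  these are approximated by continuous functions in \<open>L\<^sup>1(\<rho>)\<close> and \<open>L\<^sup>1(\<gamma>)\<close> at once.
\<close>

lemma integrable_bounded:
  fixes f :: "'b \<Rightarrow> real"
  assumes "finite_measure M" "f \<in> borel_measurable M" "\<And>x. \<bar>f x\<bar> \<le> B"
  shows "integrable M f"
  using finite_measure.integrable_const_bound[OF assms(1), of f B] assms(2,3) by auto

lemma borel_measurable_sets_eq_borel:
  assumes "sets M = sets borel" "f \<in> borel_measurable borel"
  shows "f \<in> borel_measurable M"
  using assms measurable_cong_sets[OF assms(1) refl] by simp

lemma integrable_bounded_borel:
  fixes f :: "'b::topological_space \<Rightarrow> real"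
  assumes "finite_measure M" "sets M = sets borel" "f \<in> borel_measurable borel" "\<And>x. \<bar>f x\<bar> \<le> B"
  shows "integrable M f"
  using integrable_bounded[OF assms(1) _ assms(4)] borel_measurable_sets_eq_borel[OF assms(2,3)] .

lemma nn_integral_SUP_min:
  fixes f :: "'b \<Rightarrow> real"
  assumes f: "f \<in> borel_measurable M"
  shows "(SUP N::nat. \<integral>\<^sup>+x. ennreal (min (real N) (f x)) \<partial>M) = (\<integral>\<^sup>+x. ennreal (f x) \<partial>M)"
proof -
  have "(SUP N::nat. ennreal (min (real N) (f x))) = ennreal (f x)" for x
  proof (rule antisym)
    show "(SUP N::nat. ennreal (min (real N) (f x))) \<le> ennreal (f x)"
      by (intro SUP_least ennreal_leI) simp
    have "f x \<le> real (nat \<lceil>f x\<rceil>)" by linarith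
    then show "ennreal (f x) \<le> (SUP N::nat. ennreal (min (real N) (f x)))"
      by (intro SUP_upper2[where i="nat \<lceil>f x\<rceil>"]) simp_all
  qed
  then have "(\<integral>\<^sup>+x. ennreal (f x) \<partial>M) = (\<integral>\<^sup>+x. (SUP N::nat. ennreal (min (real N) (f x))) \<partial>M)"
    by simp
  also have "\<dots> = (SUP N::nat. \<integral>\<^sup>+x. ennreal (min (real N) (f x)) \<partial>M)"
    by (rule nn_integral_monotone_convergence_SUP)
       (use f in \<open>auto simp: incseq_def le_fun_def intro!: ennreal_leI\<close>)
  finally show ?thesis ..
qed

lemma (in prob_space) exists_nn_integral_min_gt:
  fixes f :: "'a \<Rightarrow> real"
  assumes f: "f \<in> borel_measurable M" and s: "ereal s < enn2ereal (\<integral>\<^sup>+x. ennreal (f x) \<partial>M)"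
  obtains N :: nat where "s < enn2real (\<integral>\<^sup>+x. ennreal (min (real N) (f x)) \<partial>M)"
proof (cases "s < 0")
  case True
  then show ?thesis using that[of 0] enn2real_nonneg by (metis less_le_trans not_le)
next
  case False
  then have "ennreal s < (\<integral>\<^sup>+x. ennreal (f x) \<partial>M)" using s by (simp add: less_ennreal.rep_eq)
  then obtain N :: nat where N: "ennreal s < (\<integral>\<^sup>+x. ennreal (min (real N) (f x)) \<partial>M)"
    unfolding nn_integral_SUP_min[OF f, symmetric] by (auto simp: less_SUP_iff)
  have "(\<integral>\<^sup>+x. ennreal (min (real N) (f x)) \<partial>M) \<le> (\<integral>\<^sup>+x. ennreal (real N) \<partial>M)"
    by (intro nn_integral_mono ennreal_leI) simp
  then have "(\<integral>\<^sup>+x. ennreal (min (real N) (f x)) \<partial>M) < top" by (simp add: emeasure_space_1 le_less_trans)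
  then show ?thesis
    using N False by (intro that[of N]) (metis enn2real_ennreal ennreal_enn2real ennreal_less_iff enn2real_nonneg less_top not_le)
qed

lemma enn2ereal_eq_ereal_enn2real: "x \<noteq> top \<Longrightarrow> enn2ereal x = ereal (enn2real x)"
  by (metis enn2ereal_ennreal enn2real_nonneg ennreal_enn2real less_top)

lemma (in prob_space) integrable_exp_bounded:
  fixes f :: "'a \<Rightarrow> real"
  assumes "f \<in> borel_measurable M" "\<And>x. \<bar>f x\<bar> \<le> N"
  shows "integrable M (\<lambda>x. exp (f x))"
proof (rule integrable_bounded[OF finite_measure_axioms, where B="exp N"])
  show "\<bar>exp (f x)\<bar> \<le> exp N" for x using abs_le_D1[OF assms(2)] by simp
qed (use assms(1) in simp)

lemma (in prob_space) exp_neg_le_integral_exp: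
  fixes f :: "'a \<Rightarrow> real"
  assumes "f \<in> borel_measurable M" "\<And>x. \<bar>f x\<bar> \<le> N"
  shows "exp (- N) \<le> (\<integral>x. exp (f x) \<partial>M)"
proof -
  have "(\<integral>x. exp (- N) \<partial>M) \<le> (\<integral>x. exp (f x) \<partial>M)"
  proof (rule integral_mono[OF _ integrable_exp_bounded[OF assms]])
    show "exp (- N) \<le> exp (f x)" for x using assms(2)[of x] by simp
  qed simp
  then show ?thesis by (simp add: prob_space)
qed

section \<open>Radon--Nikodym densities and relative entropy\<close>

definition RN_density :: "'b measure \<Rightarrow> 'b measure \<Rightarrow> 'b \<Rightarrow> real" where
  "RN_density \<rho> \<gamma> x = enn2real (RN_deriv \<rho> \<gamma> x)"

context
  fixes \<rho> \<gamma> :: "'b measure"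
  assumes prob_\<rho>: "prob_space \<rho>" and prob_\<gamma>: "prob_space \<gamma>" and sets_\<gamma>: "sets \<gamma> = sets \<rho>"
begin

interpretation R: prob_space \<rho> by (rule prob_\<rho>)
interpretation G: prob_space \<gamma> by (rule prob_\<gamma>)

lemma measurable_\<gamma>_eq: "measurable \<gamma> X = measurable \<rho> X"
  by (rule measurable_cong_sets[OF sets_\<gamma> refl])

lemma RN_density_measurable [measurable]: "RN_density \<rho> \<gamma> \<in> borel_measurable \<rho>"
  unfolding RN_density_def by measurable

lemma RN_density_measurable': "RN_density \<rho> \<gamma> \<in> borel_measurable \<gamma>"
  unfolding measurable_\<gamma>_eq by (rule RN_density_measurable)

lemma RN_density_nonneg: "0 \<le> RN_density \<rho> \<gamma> x"
  by (simp add: RN_density_def)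

context
  assumes ac: "absolutely_continuous \<rho> \<gamma>"
begin

lemma density_RN_density: "\<gamma> = density \<rho> (\<lambda>x. ennreal (RN_density \<rho> \<gamma> x))"
proof -
  have "AE x in \<rho>. RN_deriv \<rho> \<gamma> x \<noteq> \<infinity>"
    using R.RN_deriv_finite[OF _ ac sets_\<gamma>] G.sigma_finite_measure_axioms by blast
  then have "density \<rho> (RN_deriv \<rho> \<gamma>) = density \<rho> (\<lambda>x. ennreal (RN_density \<rho> \<gamma> x))"
    by (intro density_cong) (auto simp: RN_density_def ennreal_enn2real_if)
  then show ?thesis using R.density_RN_deriv[OF ac sets_\<gamma>] by simp
qed

lemma AE_RN_density_pos: "AE x in \<gamma>. 0 < RN_density \<rho> \<gamma> x"
proof -
  have "AE x in density \<rho> (\<lambda>x. ennreal (RN_density \<rho> \<gamma> x)). 0 < RN_density \<rho> \<gamma> x"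
    by (subst AE_density) auto
  then show ?thesis by (simp only: density_RN_density[symmetric])
qed

lemma integral_RN_density_mult:
  assumes "f \<in> borel_measurable \<rho>"
  shows "(\<integral>x. RN_density \<rho> \<gamma> x * f x \<partial>\<rho>) = (\<integral>x. f x \<partial>\<gamma>)"
proof -
  have "(\<integral>x. RN_density \<rho> \<gamma> x * f x \<partial>\<rho>) = (\<integral>x. f x \<partial>density \<rho> (\<lambda>x. ennreal (RN_density \<rho> \<gamma> x)))"
    by (subst integral_density) (auto simp: assms RN_density_nonneg)
  then show ?thesis by (simp only: density_RN_density[symmetric])
qed

lemma integrable_RN_density_mult:
  assumes "f \<in> borel_measurable \<rho>" "integrable \<rho> (\<lambda>x. RN_density \<rho> \<gamma> x * f x)"
  shows "integrable \<gamma> f"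
proof -
  have "integrable (density \<rho> (\<lambda>x. ennreal (RN_density \<rho> \<gamma> x))) f"
    by (subst integrable_density) (auto simp: assms RN_density_nonneg)
  then show ?thesis by (simp only: density_RN_density[symmetric])
qed

lemma nn_integral_RN_density_mult:
  assumes "f \<in> borel_measurable \<rho>"
  shows "(\<integral>\<^sup>+x. ennreal (RN_density \<rho> \<gamma> x) * f x \<partial>\<rho>) = (\<integral>\<^sup>+x. f x \<partial>\<gamma>)"
proof -
  have "(\<integral>\<^sup>+x. ennreal (RN_density \<rho> \<gamma> x) * f x \<partial>\<rho>) = (\<integral>\<^sup>+x. f x \<partial>density \<rho> (\<lambda>x. ennreal (RN_density \<rho> \<gamma> x)))"
    by (subst nn_integral_density) (auto simp: assms)
  then show ?thesis by (simp only: density_RN_density[symmetric])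
qed

lemma nn_integral_RN_density: "(\<integral>\<^sup>+x. ennreal (RN_density \<rho> \<gamma> x) \<partial>\<rho>) = 1"
  using nn_integral_RN_density_mult[of "\<lambda>_. 1"] G.emeasure_space_1 by simp

lemma integrable_RN_density: "integrable \<rho> (RN_density \<rho> \<gamma>)"
  using nn_integral_RN_density
  by (intro integrableI_nn_integral_finite[OF RN_density_measurable]) (auto simp: RN_density_nonneg)

lemma integral_RN_density: "(\<integral>x. RN_density \<rho> \<gamma> x \<partial>\<rho>) = 1"
  using integral_eq_nn_integral[OF RN_density_measurable] nn_integral_RN_density
  by (simp add: RN_density_nonneg)

text \<open>The negative part of the entropy is at most 1, because \<open>g (- ln g) \<le> 1 - g\<close>.\<close>

lemma nn_integral_neg_ln_RN_density_le_1:
  "(\<integral>\<^sup>+x. ennreal (- ln (RN_density \<rho> \<gamma> x)) \<partial>\<gamma>) \<le> 1"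
proof -
  let ?g = "RN_density \<rho> \<gamma>"
  have "(\<integral>\<^sup>+x. ennreal (- ln (?g x)) \<partial>\<gamma>) = (\<integral>\<^sup>+x. ennreal (?g x) * ennreal (- ln (?g x)) \<partial>\<rho>)"
    by (rule nn_integral_RN_density_mult[symmetric]) (simp add: RN_density_measurable)
  also have "\<dots> \<le> (\<integral>\<^sup>+x. 1 \<partial>\<rho>)"
  proof (rule nn_integral_mono)
    fix x
    have "?g x * (- ln (?g x)) \<le> 1"
    proof (cases "?g x = 0")
      case False
      then have p: "?g x > 0" using RN_density_nonneg[of x] by simp
      have "ln (1 / ?g x) \<le> 1 / ?g x - 1" using p by (intro ln_le_minus_one) simp
      then have "?g x * (- ln (?g x)) \<le> ?g x * (1 / ?g x - 1)"
        using p by (intro mult_left_mono) (auto simp: ln_div)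
      also have "\<dots> = 1 - ?g x" using p by (simp add: field_simps)
      finally show ?thesis using p by simp
    qed simp
    then show "ennreal (?g x) * ennreal (- ln (?g x)) \<le> 1"
      by (simp add: ennreal_mult'[symmetric] ennreal_le_1 RN_density_nonneg)
  qed
  finally show ?thesis by (simp add: R.emeasure_space_1)
qed

lemma rel_ent_eq_pos_minus_neg:
  "rel_ent \<gamma> \<rho> = enn2ereal (\<integral>\<^sup>+x. ennreal (ln (RN_density \<rho> \<gamma> x)) \<partial>\<gamma>)
     - ereal (enn2real (\<integral>\<^sup>+x. ennreal (- ln (RN_density \<rho> \<gamma> x)) \<partial>\<gamma>))"
proof -
  let ?Q = "\<integral>\<^sup>+x. ennreal (- ln (RN_density \<rho> \<gamma> x)) \<partial>\<gamma>"
  have "?Q \<noteq> top" using nn_integral_neg_ln_RN_density_le_1 by (auto simp: top_unique)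
  then have "enn2ereal ?Q = ereal (enn2real ?Q)" by (rule enn2ereal_eq_ereal_enn2real)
  then show ?thesis unfolding rel_ent_def RN_density_def using ac sets_\<gamma> by simp
qed

lemma rel_ent_eq_integral:
  assumes int: "integrable \<gamma> (\<lambda>x. ln (RN_density \<rho> \<gamma> x))"
  shows "rel_ent \<gamma> \<rho> = ereal (\<integral>x. ln (RN_density \<rho> \<gamma> x) \<partial>\<gamma>)"
proof -
  let ?P = "\<integral>\<^sup>+x. ennreal (ln (RN_density \<rho> \<gamma> x)) \<partial>\<gamma>"
  have "?P \<noteq> top" using int by (simp add: real_integrable_def)
  then have "enn2ereal ?P = ereal (enn2real ?P)" by (rule enn2ereal_eq_ereal_enn2real)
  then show ?thesis using real_lebesgue_integral_def[OF int] by (simp add: rel_ent_eq_pos_minus_neg)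
qed

lemma rel_ent_eq_infinity:
  assumes "\<not> integrable \<gamma> (\<lambda>x. ln (RN_density \<rho> \<gamma> x))"
  shows "rel_ent \<gamma> \<rho> = \<infinity>"
proof -
  have "(\<integral>\<^sup>+x. ennreal (- ln (RN_density \<rho> \<gamma> x)) \<partial>\<gamma>) \<noteq> \<infinity>"
    using nn_integral_neg_ln_RN_density_le_1 by (auto simp: top_unique)
  then have "(\<integral>\<^sup>+x. ennreal (ln (RN_density \<rho> \<gamma> x)) \<partial>\<gamma>) = \<infinity>"
    using assms RN_density_measurable' by (auto simp: real_integrable_def)
  then show ?thesis by (simp add: rel_ent_eq_pos_minus_neg)
qed

section \<open>The Donsker--Varadhan variational formula\<close>

text \<open>Gibbs' inequality: \<open>h - ln g \<le> e\<^sup>h / g - 1\<close> \<open>\<gamma>\<close>-a.e., and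
  \<open>\<integral> e\<^sup>h / g d\<gamma> \<le> \<integral> e\<^sup>h d\<rho> = 1\<close>.\<close>

lemma integral_le_integral_ln_RN_density:
  assumes h: "h \<in> borel_measurable \<rho>" and h_bound: "\<And>x. \<bar>h x\<bar> \<le> C"
    and exp_h: "(\<integral>x. exp (h x) \<partial>\<rho>) = 1"
    and int_ln: "integrable \<gamma> (\<lambda>x. ln (RN_density \<rho> \<gamma> x))"
  shows "(\<integral>x. h x \<partial>\<gamma>) \<le> (\<integral>x. ln (RN_density \<rho> \<gamma> x) \<partial>\<gamma>)"
proof -
  let ?g = "RN_density \<rho> \<gamma>"
  have int_h: "integrable \<gamma> h"
    using h h_bound by (intro integrable_bounded[OF G.finite_measure_axioms]) (auto simp: measurable_\<gamma>_eq)
  have quot: "(\<lambda>x. exp (h x) / ?g x) \<in> borel_measurable \<rho>" using h by measurable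
  have dens_quot: "\<bar>?g x * (exp (h x) / ?g x)\<bar> \<le> exp (h x)" for x
    by (auto simp: abs_mult RN_density_nonneg)
  have int_quot: "integrable \<rho> (\<lambda>x. ?g x * (exp (h x) / ?g x))"
  proof (rule integrable_bounded[OF R.finite_measure_axioms])
    show "(\<lambda>x. ?g x * (exp (h x) / ?g x)) \<in> borel_measurable \<rho>" using h by measurable
    show "\<bar>?g x * (exp (h x) / ?g x)\<bar> \<le> exp C" for x
      using dens_quot[of x] abs_le_D1[OF h_bound[of x]] by (meson exp_le_cancel_iff order_trans)
  qed
  then have int_quot': "integrable \<gamma> (\<lambda>x. exp (h x) / ?g x)"
    by (rule integrable_RN_density_mult[OF quot])
  have "(\<integral>x. h x - ln (?g x) \<partial>\<gamma>) \<le> (\<integral>x. exp (h x) / ?g x - 1 \<partial>\<gamma>)"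
  proof (rule integral_mono_AE)
    show "AE x in \<gamma>. h x - ln (?g x) \<le> exp (h x) / ?g x - 1"
      using AE_RN_density_pos
    proof eventually_elim
      case (elim x)
      have "ln (exp (h x) / ?g x) \<le> exp (h x) / ?g x - 1"
        using elim by (intro ln_le_minus_one) simp
      then show ?case using elim by (simp add: ln_div)
    qed
  qed (use int_h int_ln int_quot' in simp_all)
  also have "\<dots> = (\<integral>x. ?g x * (exp (h x) / ?g x) \<partial>\<rho>) - 1"
    unfolding integral_RN_density_mult[OF quot] using int_quot' by (simp add: G.prob_space)
  also have "(\<integral>x. ?g x * (exp (h x) / ?g x) \<partial>\<rho>) \<le> (\<integral>x. exp (h x) \<partial>\<rho>)"
    using dens_quot R.integrable_exp_bounded[OF h h_bound]
    by (intro integral_mono[OF int_quot]) (auto simp: abs_le_iff)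
  finally show ?thesis using int_h int_ln exp_h by simp
qed

end

lemma Donsker_Varadhan_le_rel_ent:
  assumes \<phi>: "\<phi> \<in> borel_measurable \<rho>" and \<phi>_bound: "\<And>x. \<bar>\<phi> x\<bar> \<le> N"
  shows "ereal ((\<integral>x. \<phi> x \<partial>\<gamma>) - ln (\<integral>x. exp (\<phi> x) \<partial>\<rho>)) \<le> rel_ent \<gamma> \<rho>"
proof (cases "absolutely_continuous \<rho> \<gamma> \<and> integrable \<gamma> (\<lambda>x. ln (RN_density \<rho> \<gamma> x))")
  case not_ac_int: False
  show ?thesis
  proof (cases "absolutely_continuous \<rho> \<gamma>")
    case True
    then show ?thesis using not_ac_int by (simp add: rel_ent_eq_infinity)
  qed (simp add: rel_ent_def)
next
  case True
  then have ac: "absolutely_continuous \<rho> \<gamma>" and int_ln: "integrable \<gamma> (\<lambda>x. ln (RN_density \<rho> \<gamma> x))"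
    by auto
  define Z where "Z = (\<integral>x. exp (\<phi> x) \<partial>\<rho>)"
  have Z_pos: "0 < Z"
    using R.exp_neg_le_integral_exp[OF \<phi> \<phi>_bound] exp_gt_zero[of "- N"] unfolding Z_def by linarith
  have "(\<integral>x. \<phi> x - ln Z \<partial>\<gamma>) \<le> (\<integral>x. ln (RN_density \<rho> \<gamma> x) \<partial>\<gamma>)"
  proof (rule integral_le_integral_ln_RN_density[OF ac _ _ _ int_ln])
    show "(\<lambda>x. \<phi> x - ln Z) \<in> borel_measurable \<rho>" using \<phi> by measurable
    show "\<bar>\<phi> x - ln Z\<bar> \<le> N + \<bar>ln Z\<bar>" for x
      using \<phi>_bound[of x] abs_triangle_ineq4[of "\<phi> x" "ln Z"] by linarith
    show "(\<integral>x. exp (\<phi> x - ln Z) \<partial>\<rho>) = 1"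
      using Z_pos by (simp add: exp_diff Z_def[symmetric])
  qed
  moreover have "integrable \<gamma> \<phi>"
    using \<phi> \<phi>_bound by (intro integrable_bounded[OF G.finite_measure_axioms]) (auto simp: measurable_\<gamma>_eq)
  ultimately show ?thesis by (simp add: rel_ent_eq_integral[OF ac int_ln] Z_def G.prob_space)
qed

lemma rel_ent_nonneg: "0 \<le> rel_ent \<gamma> \<rho>"
  using Donsker_Varadhan_le_rel_ent[of "\<lambda>_. 0" 0] by (simp add: R.prob_space zero_ereal_def)

lemma Donsker_Varadhan_indicator_not_ac:
  fixes M :: real
  assumes "\<not> absolutely_continuous \<rho> \<gamma>"
  obtains \<phi> N where "\<phi> \<in> borel_measurable \<rho>" "\<And>x. \<bar>\<phi> x\<bar> \<le> N"
    "M < (\<integral>x. \<phi> x \<partial>\<gamma>) - ln (\<integral>x. exp (\<phi> x) \<partial>\<rho>)"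
proof -
  from assms obtain A where A: "A \<in> null_sets \<rho>" "A \<notin> null_sets \<gamma>"
    unfolding absolutely_continuous_def by blast
  have A_sets: "A \<in> sets \<rho>" "A \<in> sets \<gamma>" using A(1) sets_\<gamma> by auto
  have A_pos: "measure \<gamma> A > 0"
    using A(2) A_sets(2) G.emeasure_eq_measure by (auto simp: null_sets_def zero_less_measure_iff)
  define t where "t = (\<bar>M\<bar> + 1) / measure \<gamma> A"
  have "t > 0" using A_pos by (simp add: t_def)
  have "AE x in \<rho>. exp (t * indicator A x) = 1"
    using AE_not_in[OF A(1)] by eventually_elim simp
  then have "(\<integral>x. exp (t * indicator A x) \<partial>\<rho>) = (\<integral>x. 1 \<partial>\<rho>)"
    by (intro integral_cong_AE) (use A_sets in auto)
  moreover have "(\<integral>x. t * indicator A x \<partial>\<gamma>) = \<bar>M\<bar> + 1"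
    using A_sets A_pos by (simp add: t_def)
  ultimately show ?thesis
    using \<open>t > 0\<close> A_sets
    by (intro that[of "\<lambda>x. t * indicator A x" t]) (auto simp: R.prob_space indicator_def)
qed

text \<open>Truncating \<open>ln g\<close>, \<open>g = d\<gamma>/d\<rho>\<close>, above at \<open>N\<close> and below at \<open>-K\<close> gives bounded test
  functions that nearly attain the entropy: the integral against \<open>\<gamma>\<close> converges to the entropy as
  \<open>N \<rightarrow> \<infinity>\<close>, while \<open>\<integral> e\<^sup>\<phi> d\<rho> \<le> \<integral> (g + e\<^sup>-\<^sup>K) d\<rho> = 1 + e\<^sup>-\<^sup>K\<close>.\<close>

definition truncated_log_density :: "nat \<Rightarrow> nat \<Rightarrow> 'b \<Rightarrow> real" where
  "truncated_log_density N K x = min (real N) (ln (max (RN_density \<rho> \<gamma> x) (exp (- real K))))"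

lemma truncated_log_density_measurable [measurable]:
  "truncated_log_density N K \<in> borel_measurable \<rho>"
  unfolding truncated_log_density_def[abs_def] by measurable

lemma abs_truncated_log_density_le: "\<bar>truncated_log_density N K x\<bar> \<le> real N + real K"
proof -
  have "- real K \<le> ln (max (RN_density \<rho> \<gamma> x) (exp (- real K)))"
    using ln_le_cancel_iff[of "exp (- real K)" "max (RN_density \<rho> \<gamma> x) (exp (- real K))"]
    by (simp add: less_max_iff_disj)
  then show ?thesis by (auto simp: truncated_log_density_def abs_le_iff)
qed

lemma ln_integral_exp_truncated_log_density_le:
  assumes ac: "absolutely_continuous \<rho> \<gamma>"
  shows "ln (\<integral>x. exp (truncated_log_density N K x) \<partial>\<rho>) \<le> exp (- real K)"
proof -
  let ?g = "RN_density \<rho> \<gamma>"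
  define Z where "Z = (\<integral>x. exp (truncated_log_density N K x) \<partial>\<rho>)"
  have "Z \<le> (\<integral>x. ?g x + exp (- real K) \<partial>\<rho>)" unfolding Z_def
  proof (rule integral_mono[OF R.integrable_exp_bounded[OF _ abs_truncated_log_density_le]])
    show "integrable \<rho> (\<lambda>x. ?g x + exp (- real K))" using integrable_RN_density[OF ac] by simp
    fix x
    have "exp (truncated_log_density N K x) \<le> exp (ln (max (?g x) (exp (- real K))))"
      by (simp add: truncated_log_density_def)
    also have "\<dots> = max (?g x) (exp (- real K))" by (simp add: less_max_iff_disj)
    also have "\<dots> \<le> ?g x + exp (- real K)" using RN_density_nonneg[of x] by simp
    finally show "exp (truncated_log_density N K x) \<le> ?g x + exp (- real K)" .
  qed simp
  also have "\<dots> = 1 + exp (- real K)"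
    using integrable_RN_density[OF ac] integral_RN_density[OF ac] by (simp add: R.prob_space)
  finally have "Z \<le> 1 + exp (- real K)" .
  moreover have "0 < Z"
    using R.exp_neg_le_integral_exp[OF truncated_log_density_measurable[of N K]
        abs_truncated_log_density_le[of N K]]
      exp_gt_zero[of "- (real N + real K)"]
    unfolding Z_def by linarith
  ultimately show ?thesis using ln_le_minus_one[of Z] unfolding Z_def by linarith
qed

lemma integral_truncated_log_density_ge:
  assumes ac: "absolutely_continuous \<rho> \<gamma>"
  shows "enn2real (\<integral>\<^sup>+x. ennreal (min (real N) (ln (RN_density \<rho> \<gamma> x))) \<partial>\<gamma>)
      - enn2real (\<integral>\<^sup>+x. ennreal (- ln (RN_density \<rho> \<gamma> x)) \<partial>\<gamma>)
    \<le> (\<integral>x. truncated_log_density N K x \<partial>\<gamma>)"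
proof -
  let ?g = "RN_density \<rho> \<gamma>"
  define a where "a = (\<lambda>x. max 0 (min (real N) (ln (?g x))))"
  define b where "b = (\<lambda>x. max 0 (min (real K) (- ln (?g x))))"
  have a: "a \<in> borel_measurable \<gamma>" unfolding a_def measurable_\<gamma>_eq by measurable
  have b: "b \<in> borel_measurable \<gamma>" unfolding b_def measurable_\<gamma>_eq by measurable
  have int_a: "integrable \<gamma> a"
    by (rule integrable_bounded[OF G.finite_measure_axioms a, where B="real N"]) (simp add: a_def)
  have int_b: "integrable \<gamma> b"
    by (rule integrable_bounded[OF G.finite_measure_axioms b, where B="real K"]) (simp add: b_def)
  have "AE x in \<gamma>. truncated_log_density N K x = a x - b x"
  proof -
    have split: "min (real N) (max l (- real K)) = max 0 (min (real N) l) - max 0 (min (real K) (- l))"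
      for l :: real
      by (auto simp: min_def max_def)
    have ln_max: "ln (max (?g x) (exp (- real K))) = max (ln (?g x)) (- real K)" if "0 < ?g x" for x
    proof -
      have "ln (?g x) \<le> - real K \<longleftrightarrow> ?g x \<le> exp (- real K)"
        using that by (metis exp_le_cancel_iff exp_ln)
      then show ?thesis using that by (auto simp: max_def)
    qed
    show ?thesis
      using AE_RN_density_pos[OF ac]
      by eventually_elim (simp add: truncated_log_density_def a_def b_def ln_max split)
  qed
  then have "(\<integral>x. truncated_log_density N K x \<partial>\<gamma>) = (\<integral>x. a x \<partial>\<gamma>) - (\<integral>x. b x \<partial>\<gamma>)"
    using a b int_a int_b
    by (subst integral_cong_AE[where g="\<lambda>x. a x - b x"]) (auto simp: measurable_\<gamma>_eq)
  moreover have "(\<integral>x. a x \<partial>\<gamma>) = enn2real (\<integral>\<^sup>+x. ennreal (min (real N) (ln (?g x))) \<partial>\<gamma>)"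
    using a by (subst integral_eq_nn_integral)
      (auto simp: a_def max_def ennreal_neg intro!: arg_cong[where f=enn2real] nn_integral_cong)
  moreover have "(\<integral>x. b x \<partial>\<gamma>) \<le> enn2real (\<integral>\<^sup>+x. ennreal (- ln (?g x)) \<partial>\<gamma>)"
  proof -
    have "(\<integral>\<^sup>+x. ennreal (b x) \<partial>\<gamma>) \<le> (\<integral>\<^sup>+x. ennreal (- ln (?g x)) \<partial>\<gamma>)"
      by (intro nn_integral_mono) (auto simp: b_def max_def ennreal_neg intro: ennreal_leI)
    moreover have "(\<integral>\<^sup>+x. ennreal (- ln (?g x)) \<partial>\<gamma>) < top"
      using nn_integral_neg_ln_RN_density_le_1[OF ac] by (simp add: le_less_trans)
    ultimately show ?thesis
      using b by (subst integral_eq_nn_integral) (auto simp: b_def intro: enn2real_mono)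
  qed
  ultimately show ?thesis by linarith
qed

lemma Donsker_Varadhan_approx_measurable:
  fixes M :: real
  assumes M: "ereal M < rel_ent \<gamma> \<rho>"
  obtains \<phi> N where "\<phi> \<in> borel_measurable \<rho>" "\<And>x. \<bar>\<phi> x\<bar> \<le> N"
    "M < (\<integral>x. \<phi> x \<partial>\<gamma>) - ln (\<integral>x. exp (\<phi> x) \<partial>\<rho>)"
proof (cases "absolutely_continuous \<rho> \<gamma>")
  case False
  then show ?thesis using Donsker_Varadhan_indicator_not_ac that by blast
next
  case ac: True
  let ?g = "RN_density \<rho> \<gamma>"
  define P where "P = (\<integral>\<^sup>+x. ennreal (ln (?g x)) \<partial>\<gamma>)"
  define q where "q = enn2real (\<integral>\<^sup>+x. ennreal (- ln (?g x)) \<partial>\<gamma>)"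
  have "ereal (M + q) < enn2ereal P"
    using M enn2ereal_nonneg[of P] unfolding rel_ent_eq_pos_minus_neg[OF ac] P_def[symmetric] q_def[symmetric]
    by (cases "enn2ereal P") auto
  then obtain s where s: "M + q < s" "ereal s < enn2ereal P"
    using ereal_dense2 by force
  have "(\<lambda>x. ln (?g x)) \<in> borel_measurable \<gamma>" unfolding measurable_\<gamma>_eq by measurable
  then obtain N :: nat where N: "s < enn2real (\<integral>\<^sup>+x. ennreal (min (real N) (ln (?g x))) \<partial>\<gamma>)"
    using G.exists_nn_integral_min_gt s(2) unfolding P_def by blast
  obtain K :: nat where "1 / (s - (M + q)) < real K" using reals_Archimedean2 by blast
  then have "inverse (s - (M + q)) < exp (real K)"
    using exp_ge_add_one_self[of "real K"] unfolding divide_inverse by linarith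
  then have "inverse (exp (real K)) < inverse (inverse (s - (M + q)))"
    using s(1) by (intro less_imp_inverse_less) auto
  then have K: "exp (- real K) < s - (M + q)" using s(1) by (simp add: exp_minus)
  show ?thesis
  proof (rule that)
    show "M < (\<integral>x. truncated_log_density N K x \<partial>\<gamma>)
        - ln (\<integral>x. exp (truncated_log_density N K x) \<partial>\<rho>)"
      using integral_truncated_log_density_ge[OF ac, where N=N and K=K]
        ln_integral_exp_truncated_log_density_le[OF ac, where N=N and K=K]
        N K unfolding q_def by linarith
  qed (rule truncated_log_density_measurable, rule abs_truncated_log_density_le)
qed

end

section \<open>Approximation of bounded Borel functions by continuous ones\<close>

lemma exists_compact_subset_measure_diff_less:
  fixes M :: "'b::euclidean_space measure"
  assumes P: "prob_space M" and s: "sets M = sets borel" and B: "B \<in> sets borel" and e: "e > 0"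
  shows "\<exists>K. compact K \<and> K \<subseteq> B \<and> measure M (B - K) < e"
proof -
  interpret prob_space M by fact
  show ?thesis
  proof (cases "measure M B < e")
    case True then show ?thesis by (intro exI[of _ "{}"]) auto
  next
    case False
    have reg: "emeasure M B = (SUP K \<in> {K. K \<subseteq> B \<and> compact K}. emeasure M K)"
      by (rule inner_regular[OF s]) (use B in auto)
    have "ennreal (measure M B - e) < emeasure M B"
      using False e by (simp add: emeasure_eq_measure ennreal_less_iff)
    then obtain K where K: "K \<subseteq> B" "compact K" "ennreal (measure M B - e) < emeasure M K"
      unfolding reg by (auto simp: less_SUP_iff)
    have Ks: "K \<in> sets M" using K(2) s by (simp add: compact_imp_closed borel_closed)
    have Bs: "B \<in> sets M" using B s by simp
    have "measure M B - e < measure M K"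
      using K(3) False e by (simp add: emeasure_eq_measure ennreal_less_iff)
    moreover have "measure M (B - K) = measure M B - measure M K"
      using Ks Bs K(1) by (simp add: finite_measure_Diff)
    ultimately show ?thesis using K by (intro exI[of _ K]) auto
  qed
qed

lemma exists_open_superset_measure_diff_less:
  fixes M :: "'b::euclidean_space measure"
  assumes P: "prob_space M" and s: "sets M = sets borel" and B: "B \<in> sets borel" and e: "e > 0"
  shows "\<exists>U. open U \<and> B \<subseteq> U \<and> measure M (U - B) < e"
proof -
  interpret prob_space M by fact
  have reg: "emeasure M B = (INF U \<in> {U. B \<subseteq> U \<and> open U}. emeasure M U)"
    by (rule outer_regular[OF s]) (use B in auto)
  have "emeasure M B < ennreal (measure M B + e)"
    using e by (simp add: emeasure_eq_measure ennreal_less_iff)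
  then obtain U where U: "B \<subseteq> U" "open U" "emeasure M U < ennreal (measure M B + e)"
    unfolding reg by (auto simp: INF_less_iff)
  have Us: "U \<in> sets M" using U(2) s by (simp add: borel_open)
  have Bs: "B \<in> sets M" using B s by simp
  have "ennreal (measure M U) < ennreal (measure M B + e)"
    using U(3) by (simp add: emeasure_eq_measure del: ennreal_plus)
  then have "measure M U < measure M B + e"
    using e by (subst (asm) ennreal_less_iff) auto
  moreover have "measure M (U - B) = measure M U - measure M B"
    using Us Bs U(1) by (simp add: finite_measure_Diff)
  ultimately show ?thesis using U by (intro exI[of _ U]) auto
qed

lemma exists_compact_open_measure_diff_less:
  fixes M :: "'b::euclidean_space measure"
  assumes P: "prob_space M" and s: "sets M = sets borel" and B: "B \<in> sets borel" and e: "e > 0"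
  obtains K U where "compact K" "K \<subseteq> B" "open U" "B \<subseteq> U" "measure M (U - K) < e"
proof -
  interpret prob_space M by fact
  obtain K where K: "compact K" "K \<subseteq> B" "measure M (B - K) < e/2"
    using exists_compact_subset_measure_diff_less[OF P s B, of "e/2"] e by auto
  obtain U where U: "open U" "B \<subseteq> U" "measure M (U - B) < e/2"
    using exists_open_superset_measure_diff_less[OF P s B, of "e/2"] e by auto
  have sets: "U - B \<in> sets M" "B - K \<in> sets M"
    using K U B s by (auto simp: compact_imp_closed borel_closed borel_open)
  have "measure M (U - K) \<le> measure M ((U - B) \<union> (B - K))"
    using sets by (intro finite_measure_mono) auto
  also have "\<dots> \<le> measure M (U - B) + measure M (B - K)"
    using sets by (rule measure_Un_le)
  finally show ?thesis using that K U by auto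
qed

lemma integral_abs_add_le:
  fixes M :: "'b::euclidean_space measure" and u v :: "'b \<Rightarrow> real"
  assumes P: "prob_space M" and s: "sets M = sets borel"
    and um: "u \<in> borel_measurable borel" and vm: "v \<in> borel_measurable borel"
    and ub: "\<And>x. \<bar>u x\<bar> \<le> Bu" and vb: "\<And>x. \<bar>v x\<bar> \<le> Bv"
  shows "(\<integral>x. \<bar>u x + v x\<bar> \<partial>M) \<le> (\<integral>x. \<bar>u x\<bar> \<partial>M) + (\<integral>x. \<bar>v x\<bar> \<partial>M)"
proof -
  interpret prob_space M by fact
  have fm: "finite_measure M" by unfold_locales
  have iu: "integrable M (\<lambda>x. \<bar>u x\<bar>)"
    by (rule integrable_bounded[OF fm, where B=Bu]) (use um ub s borel_measurable_sets_eq_borel in auto)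
  have iv: "integrable M (\<lambda>x. \<bar>v x\<bar>)"
    by (rule integrable_bounded[OF fm, where B=Bv]) (use vm vb s borel_measurable_sets_eq_borel in auto)
  have iuv: "integrable M (\<lambda>x. \<bar>u x + v x\<bar>)"
  proof (rule integrable_bounded[OF fm, where B="Bu+Bv"])
    show "(\<lambda>x. \<bar>u x + v x\<bar>) \<in> borel_measurable M" using um vm s borel_measurable_sets_eq_borel by simp
    fix x show "\<bar>\<bar>u x + v x\<bar>\<bar> \<le> Bu + Bv" using ub[of x] vb[of x] by simp
  qed
  have "(\<integral>x. \<bar>u x + v x\<bar> \<partial>M) \<le> (\<integral>x. \<bar>u x\<bar> + \<bar>v x\<bar> \<partial>M)"
    by (rule integral_mono[OF iuv]) (use iu iv in auto)
  also have "\<dots> = (\<integral>x. \<bar>u x\<bar> \<partial>M) + (\<integral>x. \<bar>v x\<bar> \<partial>M)" using iu iv by simp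
  finally show ?thesis .
qed

lemma integral_le_measure_if_abs_le_indicator:
  fixes f :: "'b::topological_space \<Rightarrow> real"
  assumes M: "prob_space M" "sets M = sets borel" and A: "A \<in> sets borel"
    and f: "f \<in> borel_measurable borel" "\<And>x. \<bar>f x\<bar> \<le> indicator A x"
  shows "(\<integral>x. f x \<partial>M) \<le> measure M A"
proof -
  interpret prob_space M by fact
  have "(\<integral>x. f x \<partial>M) \<le> (\<integral>x. indicator A x \<partial>M)"
  proof (rule integral_mono)
    have "\<bar>f x\<bar> \<le> 1" for x using f(2)[of x] by (cases "x \<in> A") auto
    then show "integrable M f" using integrable_bounded[where B=1 and f=f and M=M] f(1) M(2) borel_measurable_sets_eq_borel by auto
    show "integrable M (indicator A :: 'b \<Rightarrow> real)"
      by (rule integrable_real_indicator) (use A M(2) in \<open>auto simp: less_top[symmetric]\<close>)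
    show "\<And>x. x \<in> space M \<Longrightarrow> f x \<le> indicator A x" using f(2) abs_le_D1 by blast
  qed
  then show ?thesis using A M(2) by simp
qed

definition quantize :: "nat \<Rightarrow> ('b \<Rightarrow> real) \<Rightarrow> 'b \<Rightarrow> real" where
  "quantize k h x = real_of_int \<lfloor>real k * h x\<rfloor> / real k"

lemma abs_sub_quantize_le:
  assumes "0 < k"
  shows "\<bar>h x - quantize k h x\<bar> \<le> 1 / real k"
proof -
  have "\<bar>real k * h x - real_of_int \<lfloor>real k * h x\<rfloor>\<bar> \<le> 1" by linarith
  moreover have "h x - quantize k h x = (real k * h x - real_of_int \<lfloor>real k * h x\<rfloor>) / real k"
    using assms by (simp add: quantize_def diff_divide_distrib)
  ultimately show ?thesis using assms by (simp add: abs_div_pos divide_right_mono)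
qed

lemma quantize_eq_sum_indicator:
  assumes k: "0 < k" and h_bound: "\<And>x. \<bar>h x\<bar> \<le> N"
  shows "quantize k h = (\<lambda>x. \<Sum>j\<in>{- \<lceil>real k * N\<rceil>..\<lceil>real k * N\<rceil>}.
      real_of_int j / real k * indicator {y. \<lfloor>real k * h y\<rfloor> = j} x)"
proof
  fix x
  let ?m = "\<lceil>real k * N\<rceil>"
  have "\<bar>real k * h x\<bar> \<le> real k * N" using h_bound[of x] k by (simp add: abs_mult mult_left_mono)
  then have "\<lfloor>real k * h x\<rfloor> \<in> {- ?m..?m}" by (simp add: abs_le_iff) linarith
  moreover have "(\<Sum>j\<in>{- ?m..?m}. real_of_int j / real k * indicator {y. \<lfloor>real k * h y\<rfloor> = j} x)
      = (\<Sum>j\<in>{- ?m..?m}. if \<lfloor>real k * h x\<rfloor> = j then real_of_int j / real k else 0)"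
    by (intro sum.cong) (auto simp: indicator_def)
  ultimately show "quantize k h x = (\<Sum>j\<in>{- ?m..?m}. real_of_int j / real k * indicator {y. \<lfloor>real k * h y\<rfloor> = j} x)"
    by (simp add: quantize_def sum.delta')
qed

text \<open>Bounded Borel functions approximable in \<open>L\<^sup>1(\<rho>)\<close> and \<open>L\<^sup>1(\<gamma>)\<close> simultaneously by bounded
  continuous functions.  The class contains indicators of Borel sets (by regularity and
  Urysohn's lemma) and is closed under linear combinations and uniform limits, hence contains
  every bounded Borel function.\<close>

definition cont_approximable :: "'b measure \<Rightarrow> 'b measure \<Rightarrow> ('b::topological_space \<Rightarrow> real) \<Rightarrow> bool" where
  "cont_approximable \<rho> \<gamma> h \<longleftrightarrow> h \<in> borel_measurable borel \<and> (\<exists>B. \<forall>x. \<bar>h x\<bar> \<le> B) \<and>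
     (\<forall>e>0. \<exists>\<psi> B. continuous_on UNIV \<psi> \<and> (\<forall>x. \<bar>\<psi> x\<bar> \<le> B) \<and>
        (\<integral>x. \<bar>h x - \<psi> x\<bar> \<partial>\<rho>) < e \<and> (\<integral>x. \<bar>h x - \<psi> x\<bar> \<partial>\<gamma>) < e)"

context
  fixes \<rho> \<gamma> :: "'b::euclidean_space measure"
  assumes rho: "prob_space \<rho>" and gam: "prob_space \<gamma>"
    and sr: "sets \<rho> = sets borel" and sg: "sets \<gamma> = sets borel"
begin

interpretation R: prob_space \<rho> by (rule rho)
interpretation G: prob_space \<gamma> by (rule gam)

lemma cont_approximable_indicator:
  assumes B: "B \<in> sets borel"
  shows "cont_approximable \<rho> \<gamma> (indicator B)"
  unfolding cont_approximable_def
proof (intro conjI allI impI)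
  show "indicator B \<in> borel_measurable borel" using B by simp
  show "\<exists>C. \<forall>x. \<bar>indicator B x :: real\<bar> \<le> C" by (intro exI[of _ 1]) (simp add: indicator_def)
  fix e :: real assume e: "e > 0"
  obtain K1 U1 where KU1: "compact K1" "K1 \<subseteq> B" "open U1" "B \<subseteq> U1" "measure \<rho> (U1 - K1) < e"
    using exists_compact_open_measure_diff_less[OF rho sr B e] .
  obtain K2 U2 where KU2: "compact K2" "K2 \<subseteq> B" "open U2" "B \<subseteq> U2" "measure \<gamma> (U2 - K2) < e"
    using exists_compact_open_measure_diff_less[OF gam sg B e] .
  define K where "K = K1 \<union> K2"
  define U where "U = U1 \<inter> U2"
  have K: "compact K" "K \<subseteq> B" using KU1 KU2 by (auto simp: K_def)
  have U: "open U" "B \<subseteq> U" using KU1 KU2 by (auto simp: U_def)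
  obtain \<psi> :: "'b \<Rightarrow> real" where \<psi>: "continuous_on UNIV \<psi>" "\<And>x. \<psi> x \<in> closed_segment 1 0"
      "\<And>x. x \<in> K \<Longrightarrow> \<psi> x = 1" "\<And>x. x \<in> - U \<Longrightarrow> \<psi> x = 0"
    using Urysohn[OF compact_imp_closed[OF K(1)] _, of "- U" 1 0] U K by (auto simp: closed_Compl)
  have \<psi>01: "0 \<le> \<psi> x \<and> \<psi> x \<le> 1" for x using \<psi>(2)[of x] by (simp add: closed_segment_eq_real_ivl)
  have closed_sets: "\<And>C :: 'b set. compact C \<Longrightarrow> C \<in> sets borel" "\<And>V :: 'b set. open V \<Longrightarrow> V \<in> sets borel"
    by (auto intro: borel_closed compact_imp_closed borel_open)
  have UK: "U - K \<in> sets borel" using K(1) U(1) closed_sets by auto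
  have diff_le: "\<bar>\<bar>indicator B x - \<psi> x\<bar>\<bar> \<le> indicator (U - K) x" for x
    using \<psi>01[of x] \<psi>(3)[of x] \<psi>(4)[of x] K(2) U(2) by (auto simp: indicator_def)
  have diff_meas: "(\<lambda>x. \<bar>indicator B x - \<psi> x\<bar>) \<in> borel_measurable borel"
    using B borel_measurable_continuous_onI[OF \<psi>(1)] by measurable
  have "measure \<rho> (U - K) \<le> measure \<rho> (U1 - K1)"
    using KU1 sr closed_sets by (intro R.finite_measure_mono) (auto simp: U_def K_def)
  moreover have "measure \<gamma> (U - K) \<le> measure \<gamma> (U2 - K2)"
    using KU2 sg closed_sets by (intro G.finite_measure_mono) (auto simp: U_def K_def)
  ultimately show "\<exists>\<psi> C. continuous_on UNIV \<psi> \<and> (\<forall>x. \<bar>\<psi> x\<bar> \<le> C) \<and>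
        (\<integral>x. \<bar>indicator B x - \<psi> x\<bar> \<partial>\<rho>) < e \<and> (\<integral>x. \<bar>indicator B x - \<psi> x\<bar> \<partial>\<gamma>) < e"
    using \<psi>(1) \<psi>01 KU1(5) KU2(5)
      integral_le_measure_if_abs_le_indicator[OF rho sr UK diff_meas diff_le]
      integral_le_measure_if_abs_le_indicator[OF gam sg UK diff_meas diff_le]
    by (intro exI[of _ \<psi>] exI[of _ 1]) auto
qed

lemma cont_approximable_add:
  assumes f: "cont_approximable \<rho> \<gamma> f" and g: "cont_approximable \<rho> \<gamma> g"
  shows "cont_approximable \<rho> \<gamma> (\<lambda>x. f x + g x)"
proof -
  obtain Bf where Bf: "\<And>x. \<bar>f x\<bar> \<le> Bf" using f unfolding cont_approximable_def by blast
  obtain Bg where Bg: "\<And>x. \<bar>g x\<bar> \<le> Bg" using g unfolding cont_approximable_def by blast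
  have fm: "f \<in> borel_measurable borel" and gm: "g \<in> borel_measurable borel"
    using f g unfolding cont_approximable_def by auto
  show ?thesis unfolding cont_approximable_def
  proof (intro conjI allI impI)
    show "(\<lambda>x. f x + g x) \<in> borel_measurable borel" using fm gm by simp
    show "\<exists>B. \<forall>x. \<bar>f x + g x\<bar> \<le> B" using Bf Bg
    proof (intro exI allI)
      fix x show "\<bar>f x + g x\<bar> \<le> Bf + Bg" using Bf[of x] Bg[of x] by linarith
    qed
    fix e :: real assume e: "e > 0"
    obtain \<psi>1 C1 where p1: "continuous_on UNIV \<psi>1" "\<forall>x. \<bar>\<psi>1 x\<bar> \<le> C1"
        "(\<integral>x. \<bar>f x - \<psi>1 x\<bar> \<partial>\<rho>) < e/2" "(\<integral>x. \<bar>f x - \<psi>1 x\<bar> \<partial>\<gamma>) < e/2"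
      using f e unfolding cont_approximable_def by (meson half_gt_zero)
    obtain \<psi>2 C2 where p2: "continuous_on UNIV \<psi>2" "\<forall>x. \<bar>\<psi>2 x\<bar> \<le> C2"
        "(\<integral>x. \<bar>g x - \<psi>2 x\<bar> \<partial>\<rho>) < e/2" "(\<integral>x. \<bar>g x - \<psi>2 x\<bar> \<partial>\<gamma>) < e/2"
      using g e unfolding cont_approximable_def by (meson half_gt_zero)
    have m1: "(\<lambda>x. f x - \<psi>1 x) \<in> borel_measurable borel"
      using fm borel_measurable_continuous_onI[OF p1(1)] by simp
    have m2: "(\<lambda>x. g x - \<psi>2 x) \<in> borel_measurable borel"
      using gm borel_measurable_continuous_onI[OF p2(1)] by simp
    have b1: "\<bar>f x - \<psi>1 x\<bar> \<le> Bf + C1" for x using Bf[of x] p1(2)[rule_format, of x] by linarith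
    have b2: "\<bar>g x - \<psi>2 x\<bar> \<le> Bg + C2" for x using Bg[of x] p2(2)[rule_format, of x] by linarith
    have eq: "(\<lambda>x. \<bar>f x + g x - (\<psi>1 x + \<psi>2 x)\<bar>) = (\<lambda>x. \<bar>(f x - \<psi>1 x) + (g x - \<psi>2 x)\<bar>)"
      by (simp add: algebra_simps)
    have t1: "(\<integral>x. \<bar>f x + g x - (\<psi>1 x + \<psi>2 x)\<bar> \<partial>\<rho>) < e"
      using integral_abs_add_le[OF rho sr m1 m2 b1 b2] p1(3) p2(3) unfolding eq by simp
    have t2: "(\<integral>x. \<bar>f x + g x - (\<psi>1 x + \<psi>2 x)\<bar> \<partial>\<gamma>) < e"
      using integral_abs_add_le[OF gam sg m1 m2 b1 b2] p1(4) p2(4) unfolding eq by simp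
    show "\<exists>\<psi> B. continuous_on UNIV \<psi> \<and> (\<forall>x. \<bar>\<psi> x\<bar> \<le> B) \<and>
        (\<integral>x. \<bar>f x + g x - \<psi> x\<bar> \<partial>\<rho>) < e \<and> (\<integral>x. \<bar>f x + g x - \<psi> x\<bar> \<partial>\<gamma>) < e"
    proof (intro exI conjI)
      show "continuous_on UNIV (\<lambda>x. \<psi>1 x + \<psi>2 x)" using p1(1) p2(1) by (intro continuous_intros)
      show "\<forall>x. \<bar>\<psi>1 x + \<psi>2 x\<bar> \<le> C1 + C2"
      proof
        fix x show "\<bar>\<psi>1 x + \<psi>2 x\<bar> \<le> C1 + C2"
          using p1(2)[rule_format, of x] p2(2)[rule_format, of x] by linarith
      qed
    qed (use t1 t2 in auto)
  qed
qed

lemma cont_approximable_cmult: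
  assumes f: "cont_approximable \<rho> \<gamma> f"
  shows "cont_approximable \<rho> \<gamma> (\<lambda>x. c * f x)"
proof -
  obtain Bf where Bf: "\<And>x. \<bar>f x\<bar> \<le> Bf" using f unfolding cont_approximable_def by blast
  have fm: "f \<in> borel_measurable borel" using f unfolding cont_approximable_def by auto
  show ?thesis unfolding cont_approximable_def
  proof (intro conjI allI impI)
    show "(\<lambda>x. c * f x) \<in> borel_measurable borel" using fm by simp
    show "\<exists>B. \<forall>x. \<bar>c * f x\<bar> \<le> B" using Bf
      by (intro exI[of _ "\<bar>c\<bar> * Bf"]) (auto simp: abs_mult intro: mult_left_mono)
    fix e :: real assume e: "e > 0"
    define e' where "e' = e / (\<bar>c\<bar> + 1)"
    have e': "e' > 0" using e by (simp add: e'_def)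
    obtain \<psi> C where p: "continuous_on UNIV \<psi>" "\<forall>x. \<bar>\<psi> x\<bar> \<le> C"
        "(\<integral>x. \<bar>f x - \<psi> x\<bar> \<partial>\<rho>) < e'" "(\<integral>x. \<bar>f x - \<psi> x\<bar> \<partial>\<gamma>) < e'"
      using f e' unfolding cont_approximable_def by meson
    have eq: "(\<lambda>x. \<bar>c * f x - c * \<psi> x\<bar>) = (\<lambda>x. \<bar>c\<bar> * \<bar>f x - \<psi> x\<bar>)"
      by (simp add: abs_mult right_diff_distrib[symmetric])
    have k: "\<bar>c\<bar> * y < e" if "y < e'" "0 \<le> y" for y
    proof -
      have "\<bar>c\<bar> * y \<le> (\<bar>c\<bar> + 1) * y" using that by (simp add: mult_right_mono)
      also have "\<dots> < (\<bar>c\<bar> + 1) * e'" using that by (intro mult_strict_left_mono) auto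
      also have "\<dots> = e" by (simp add: e'_def)
      finally show ?thesis .
    qed
    show "\<exists>\<psi> B. continuous_on UNIV \<psi> \<and> (\<forall>x. \<bar>\<psi> x\<bar> \<le> B) \<and>
        (\<integral>x. \<bar>c * f x - \<psi> x\<bar> \<partial>\<rho>) < e \<and> (\<integral>x. \<bar>c * f x - \<psi> x\<bar> \<partial>\<gamma>) < e"
    proof (intro exI conjI)
      show "continuous_on UNIV (\<lambda>x. c * \<psi> x)" using p(1) by (intro continuous_intros)
      show "\<forall>x. \<bar>c * \<psi> x\<bar> \<le> \<bar>c\<bar> * C" using p(2) by (auto simp: abs_mult intro: mult_left_mono)
      show "(\<integral>x. \<bar>c * f x - c * \<psi> x\<bar> \<partial>\<rho>) < e" unfolding eq
        using k[OF p(3)] by simp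
      show "(\<integral>x. \<bar>c * f x - c * \<psi> x\<bar> \<partial>\<gamma>) < e" unfolding eq
        using k[OF p(4)] by simp
    qed
  qed
qed

lemma cont_approximable_zero: "cont_approximable \<rho> \<gamma> (\<lambda>x. 0)"
  unfolding cont_approximable_def
  by (auto intro!: exI[of _ "\<lambda>x. 0"] continuous_intros)

lemma cont_approximable_sum:
  assumes "finite S" "\<And>j. j \<in> S \<Longrightarrow> cont_approximable \<rho> \<gamma> (f j)"
  shows "cont_approximable \<rho> \<gamma> (\<lambda>x. \<Sum>j\<in>S. f j x)"
  using assms
proof (induction S rule: finite_induct)
  case empty then show ?case using cont_approximable_zero by simp
next
  case (insert j S)
  then have "cont_approximable \<rho> \<gamma> (\<lambda>x. f j x + (\<Sum>j\<in>S. f j x))"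
    by (intro cont_approximable_add) (auto simp: fun_eq_iff)
  then show ?case using insert by simp
qed

lemma cont_approximable_quantize:
  assumes h: "h \<in> borel_measurable borel" and k: "0 < k" and h_bound: "\<And>x. \<bar>h x\<bar> \<le> N"
  shows "cont_approximable \<rho> \<gamma> (quantize k h)"
proof -
  have level_sets: "{y. \<lfloor>real k * h y\<rfloor> = j} \<in> sets borel" for j
  proof -
    have "(\<lambda>y. \<lfloor>real k * h y\<rfloor>) \<in> measurable borel (count_space UNIV)" using h by measurable
    then show ?thesis by (simp add: vimage_def measurable_sets[of _ borel "count_space UNIV" "{j}"])
  qed
  show ?thesis
    unfolding quantize_eq_sum_indicator[OF k h_bound]
    by (intro cont_approximable_sum cont_approximable_cmult cont_approximable_indicator level_sets) simp
qed

lemma cont_approximable_uniform_limit: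
  assumes h: "h \<in> borel_measurable borel" and h_bound: "\<And>x. \<bar>h x\<bar> \<le> N"
    and approx: "\<And>e. 0 < e \<Longrightarrow> \<exists>f. cont_approximable \<rho> \<gamma> f \<and> (\<forall>x. \<bar>h x - f x\<bar> \<le> e)"
  shows "cont_approximable \<rho> \<gamma> h"
  unfolding cont_approximable_def
proof (intro conjI allI impI)
  show "h \<in> borel_measurable borel" "\<exists>B. \<forall>x. \<bar>h x\<bar> \<le> B" using h h_bound by blast+
  fix e :: real assume e: "e > 0"
  then obtain f where f: "cont_approximable \<rho> \<gamma> f" "\<And>x. \<bar>h x - f x\<bar> \<le> e / 4"
    using approx[of "e / 4"] by auto
  obtain \<psi> C where \<psi>: "continuous_on UNIV \<psi>" "\<forall>x. \<bar>\<psi> x\<bar> \<le> C"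
      "(\<integral>x. \<bar>f x - \<psi> x\<bar> \<partial>\<rho>) < e / 2" "(\<integral>x. \<bar>f x - \<psi> x\<bar> \<partial>\<gamma>) < e / 2"
    using f(1) e unfolding cont_approximable_def by (meson half_gt_zero)
  obtain Bf where Bf: "\<And>x. \<bar>f x\<bar> \<le> Bf" and f_meas: "f \<in> borel_measurable borel"
    using f(1) unfolding cont_approximable_def by blast
  have hf: "(\<lambda>x. h x - f x) \<in> borel_measurable borel"
    and f\<psi>: "(\<lambda>x. f x - \<psi> x) \<in> borel_measurable borel"
    using h f_meas borel_measurable_continuous_onI[OF \<psi>(1)] by simp_all
  have f\<psi>_bound: "\<bar>f x - \<psi> x\<bar> \<le> Bf + C" for x using Bf[of x] \<psi>(2)[rule_format, of x] by linarith
  have close: "(\<integral>x. \<bar>h x - \<psi> x\<bar> \<partial>M) < e"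
    if M: "prob_space M" "sets M = sets borel" and close_f: "(\<integral>x. \<bar>f x - \<psi> x\<bar> \<partial>M) < e / 2" for M
  proof -
    interpret prob_space M by (rule M(1))
    have "integrable M (\<lambda>x. \<bar>h x - f x\<bar>)"
      by (rule integrable_bounded_borel[OF finite_measure_axioms M(2), where B="e / 4"]) (use hf f(2) in auto)
    then have "(\<integral>x. \<bar>h x - f x\<bar> \<partial>M) \<le> (\<integral>x. e / 4 \<partial>M)"
      using f(2) by (intro integral_mono) auto
    then have hf_small: "(\<integral>x. \<bar>h x - f x\<bar> \<partial>M) \<le> e / 4" by (simp add: prob_space)
    have "(\<integral>x. \<bar>(h x - f x) + (f x - \<psi> x)\<bar> \<partial>M)
        \<le> (\<integral>x. \<bar>h x - f x\<bar> \<partial>M) + (\<integral>x. \<bar>f x - \<psi> x\<bar> \<partial>M)"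
      by (rule integral_abs_add_le[OF M hf f\<psi> f(2) f\<psi>_bound])
    then show ?thesis using hf_small close_f e by simp
  qed
  show "\<exists>\<psi> B. continuous_on UNIV \<psi> \<and> (\<forall>x. \<bar>\<psi> x\<bar> \<le> B) \<and>
      (\<integral>x. \<bar>h x - \<psi> x\<bar> \<partial>\<rho>) < e \<and> (\<integral>x. \<bar>h x - \<psi> x\<bar> \<partial>\<gamma>) < e"
    using \<psi>(1,2) close[OF rho sr \<psi>(3)] close[OF gam sg \<psi>(4)] by blast
qed

lemma cont_approximable_bounded:
  assumes h: "h \<in> borel_measurable borel" and h_bound: "\<And>x. \<bar>h x\<bar> \<le> N"
  shows "cont_approximable \<rho> \<gamma> h"
proof (rule cont_approximable_uniform_limit[OF h h_bound])
  fix e :: real assume e: "0 < e"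
  obtain k :: nat where k: "1 / e < real k" using reals_Archimedean2 by blast
  moreover have "0 < 1 / e" using e by simp
  ultimately have "0 < real k" by linarith
  moreover have "1 / real k < e" using k e \<open>0 < real k\<close> by (simp add: field_simps)
  ultimately have k_pos: "0 < k" and k_large: "1 / real k \<le> e" by simp_all
  show "\<exists>f. cont_approximable \<rho> \<gamma> f \<and> (\<forall>x. \<bar>h x - f x\<bar> \<le> e)"
  proof (intro exI conjI allI)
    show "cont_approximable \<rho> \<gamma> (quantize k h)" by (rule cont_approximable_quantize[OF h k_pos h_bound])
    show "\<bar>h x - quantize k h x\<bar> \<le> e" for x
      using abs_sub_quantize_le[OF k_pos, of h x] k_large by linarith
  qed
qed

lemma exists_cont_approx_bounded:
  fixes h :: "'b \<Rightarrow> real"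
  assumes hm: "h \<in> borel_measurable borel" and hb: "\<And>x. \<bar>h x\<bar> \<le> N" and e: "e > 0"
  shows "\<exists>\<psi>. continuous_on UNIV \<psi> \<and> (\<forall>x. \<bar>\<psi> x\<bar> \<le> N) \<and>
           (\<integral>x. \<bar>h x - \<psi> x\<bar> \<partial>\<rho>) < e \<and> (\<integral>x. \<bar>h x - \<psi> x\<bar> \<partial>\<gamma>) < e"
proof -
  obtain \<psi>0 C where p: "continuous_on UNIV \<psi>0" "\<forall>x. \<bar>\<psi>0 x\<bar> \<le> C"
      "(\<integral>x. \<bar>h x - \<psi>0 x\<bar> \<partial>\<rho>) < e" "(\<integral>x. \<bar>h x - \<psi>0 x\<bar> \<partial>\<gamma>) < e"
    using cont_approximable_bounded[OF hm hb] e unfolding cont_approximable_def by meson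
  have N0: "0 \<le> N" using hb[of undefined] by linarith
  define \<psi> where "\<psi> = (\<lambda>x. max (- N) (min N (\<psi>0 x)))"
  have pc: "continuous_on UNIV \<psi>" unfolding \<psi>_def using p(1) by (intro continuous_intros)
  have pb: "\<forall>x. \<bar>\<psi> x\<bar> \<le> N" using N0 by (auto simp: \<psi>_def)
  have pw: "\<bar>h x - \<psi> x\<bar> \<le> \<bar>h x - \<psi>0 x\<bar>" for x
    using hb[of x] unfolding \<psi>_def by (auto simp: abs_le_iff max_def min_def)
  have mm: "(\<lambda>x. \<bar>h x - \<psi> x\<bar>) \<in> borel_measurable borel"
    using hm borel_measurable_continuous_onI[OF pc] by simp
  have mm0: "(\<lambda>x. \<bar>h x - \<psi>0 x\<bar>) \<in> borel_measurable borel"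
    using hm borel_measurable_continuous_onI[OF p(1)] by simp
  have cmp: "(\<integral>x. \<bar>h x - \<psi> x\<bar> \<partial>M) \<le> (\<integral>x. \<bar>h x - \<psi>0 x\<bar> \<partial>M)"
    if M: "prob_space M" "sets M = sets borel" for M
  proof -
    interpret prob_space M by fact
    have fm: "finite_measure M" by unfold_locales
    show ?thesis
    proof (rule integral_mono)
      show "integrable M (\<lambda>x. \<bar>h x - \<psi> x\<bar>)"
      proof (rule integrable_bounded_borel[OF fm M(2) mm])
        fix x show "\<bar>\<bar>h x - \<psi> x\<bar>\<bar> \<le> 2 * N" using hb[of x] pb[rule_format, of x] by linarith
      qed
      show "integrable M (\<lambda>x. \<bar>h x - \<psi>0 x\<bar>)"
      proof (rule integrable_bounded[OF fm, where B="N + C"])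
        show "(\<lambda>x. \<bar>h x - \<psi>0 x\<bar>) \<in> borel_measurable M" using mm0 M(2) borel_measurable_sets_eq_borel by auto
        fix x show "\<bar>\<bar>h x - \<psi>0 x\<bar>\<bar> \<le> N + C" using hb[of x] p(2)[rule_format, of x] by linarith
      qed
    qed (use pw in auto)
  qed
  show ?thesis using pc pb cmp[OF rho sr] cmp[OF gam sg] p(3,4)
    by (intro exI[of _ \<psi>]) auto
qed

end

section \<open>Narrow lower semicontinuity of relative entropy\<close>

lemma (in prob_space) ln_integral_exp_le:
  fixes \<phi> \<psi> :: "'a \<Rightarrow> real"
  assumes \<phi>: "\<phi> \<in> borel_measurable M" and \<psi>: "\<psi> \<in> borel_measurable M"
    and \<phi>_bound: "\<And>x. \<bar>\<phi> x\<bar> \<le> N" and \<psi>_bound: "\<And>x. \<bar>\<psi> x\<bar> \<le> N"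
  shows "ln (\<integral>x. exp (\<psi> x) \<partial>M) \<le> ln (\<integral>x. exp (\<phi> x) \<partial>M) + exp (2 * N) * (\<integral>x. \<bar>\<phi> x - \<psi> x\<bar> \<partial>M)"
proof -
  define Z\<phi> where "Z\<phi> = (\<integral>x. exp (\<phi> x) \<partial>M)"
  define Z\<psi> where "Z\<psi> = (\<integral>x. exp (\<psi> x) \<partial>M)"
  define D where "D = (\<integral>x. \<bar>\<phi> x - \<psi> x\<bar> \<partial>M)"
  have int_diff: "integrable M (\<lambda>x. \<bar>\<phi> x - \<psi> x\<bar>)"
  proof (rule integrable_bounded[OF finite_measure_axioms, where B="2 * N"])
    show "\<bar>\<bar>\<phi> x - \<psi> x\<bar>\<bar> \<le> 2 * N" for x using \<phi>_bound[of x] \<psi>_bound[of x] by linarith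
  qed (use \<phi> \<psi> in simp)
  have pointwise: "exp (\<psi> x) \<le> exp (\<phi> x) + exp N * \<bar>\<phi> x - \<psi> x\<bar>" for x
  proof -
    have "exp (\<psi> x) * (1 + (\<phi> x - \<psi> x)) \<le> exp (\<psi> x) * exp (\<phi> x - \<psi> x)"
      by (intro mult_left_mono) auto
    then have "exp (\<psi> x) + exp (\<psi> x) * (\<phi> x - \<psi> x) \<le> exp (\<phi> x)"
      by (simp add: algebra_simps exp_diff)
    moreover have "exp (\<psi> x) * (\<psi> x - \<phi> x) \<le> exp (\<psi> x) * \<bar>\<phi> x - \<psi> x\<bar>"
      by (intro mult_left_mono) auto
    moreover have "\<dots> \<le> exp N * \<bar>\<phi> x - \<psi> x\<bar>"
      using \<psi>_bound[of x] by (intro mult_right_mono) auto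
    ultimately show ?thesis by (simp add: algebra_simps)
  qed
  have "Z\<psi> \<le> (\<integral>x. exp (\<phi> x) + exp N * \<bar>\<phi> x - \<psi> x\<bar> \<partial>M)"
    unfolding Z\<psi>_def using integrable_exp_bounded[OF \<phi> \<phi>_bound] int_diff pointwise
    by (intro integral_mono integrable_exp_bounded[OF \<psi> \<psi>_bound]) auto
  also have "\<dots> = Z\<phi> + exp N * D"
    using integrable_exp_bounded[OF \<phi> \<phi>_bound] int_diff by (simp add: Z\<phi>_def D_def)
  finally have Z\<psi>_le: "Z\<psi> \<le> Z\<phi> + exp N * D" .
  have Z\<phi>_ge: "exp (- N) \<le> Z\<phi>" unfolding Z\<phi>_def by (rule exp_neg_le_integral_exp[OF \<phi> \<phi>_bound])
  have Z\<psi>_ge: "exp (- N) \<le> Z\<psi>" unfolding Z\<psi>_def by (rule exp_neg_le_integral_exp[OF \<psi> \<psi>_bound])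
  have Z_pos: "0 < Z\<phi>" "0 < Z\<psi>" using Z\<phi>_ge Z\<psi>_ge exp_gt_zero[of "- N"] by linarith+
  have "0 \<le> D" unfolding D_def by (rule integral_nonneg_AE) simp
  have "ln Z\<psi> - ln Z\<phi> = ln (Z\<psi> / Z\<phi>)" using Z_pos by (simp add: ln_div)
  also have "\<dots> \<le> Z\<psi> / Z\<phi> - 1" using Z_pos by (intro ln_le_minus_one) simp
  also have "\<dots> = (Z\<psi> - Z\<phi>) / Z\<phi>" using Z_pos by (simp add: field_simps)
  also have "\<dots> \<le> (exp N * D) / Z\<phi>" using Z\<psi>_le Z_pos by (intro divide_right_mono) auto
  also have "\<dots> \<le> (exp N * D) / exp (- N)"
    using Z\<phi>_ge Z_pos \<open>0 \<le> D\<close> by (intro divide_left_mono) auto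
  also have "\<dots> = exp (2 * N) * D" by (simp add: exp_minus field_simps flip: exp_add)
  finally show ?thesis by (simp add: Z\<phi>_def Z\<psi>_def D_def)
qed

lemma Donsker_Varadhan_approx_continuous:
  fixes \<rho> \<gamma> :: "'b::euclidean_space measure" and M :: real
  assumes rho: "prob_space \<rho>" "sets \<rho> = sets borel" and gam: "prob_space \<gamma>" "sets \<gamma> = sets borel"
    and M: "ereal M < rel_ent \<gamma> \<rho>"
  obtains \<psi> B where "continuous_on UNIV \<psi>" "\<And>x. \<bar>\<psi> x\<bar> \<le> B"
    "M < (\<integral>x. \<psi> x \<partial>\<gamma>) - ln (\<integral>x. exp (\<psi> x) \<partial>\<rho>)"
proof -
  interpret R: prob_space \<rho> by (rule rho(1))
  interpret G: prob_space \<gamma> by (rule gam(1))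
  have sets_eq: "sets \<gamma> = sets \<rho>" using rho(2) gam(2) by simp
  obtain \<phi> N where \<phi>: "\<phi> \<in> borel_measurable \<rho>" and \<phi>_bound: "\<And>x. \<bar>\<phi> x\<bar> \<le> N"
      and DV_\<phi>: "M < (\<integral>x. \<phi> x \<partial>\<gamma>) - ln (\<integral>x. exp (\<phi> x) \<partial>\<rho>)"
    using Donsker_Varadhan_approx_measurable[OF rho(1) gam(1) sets_eq M] by blast
  have \<phi>_borel: "\<phi> \<in> borel_measurable borel" using \<phi> unfolding measurable_cong_sets[OF rho(2) refl] .
  define \<eta> where "\<eta> = (\<integral>x. \<phi> x \<partial>\<gamma>) - ln (\<integral>x. exp (\<phi> x) \<partial>\<rho>) - M"
  define \<delta> where "\<delta> = \<eta> / (1 + exp (2 * N))"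
  have "\<delta> > 0" using DV_\<phi> by (simp add: \<delta>_def \<eta>_def add_pos_pos)
  obtain \<psi> where \<psi>: "continuous_on UNIV \<psi>" "\<forall>x. \<bar>\<psi> x\<bar> \<le> N"
      "(\<integral>x. \<bar>\<phi> x - \<psi> x\<bar> \<partial>\<rho>) < \<delta>" "(\<integral>x. \<bar>\<phi> x - \<psi> x\<bar> \<partial>\<gamma>) < \<delta>"
    using exists_cont_approx_bounded[OF rho(1) gam(1) rho(2) gam(2) \<phi>_borel \<phi>_bound \<open>\<delta> > 0\<close>] by blast
  have \<psi>_borel: "\<psi> \<in> borel_measurable borel" by (rule borel_measurable_continuous_onI[OF \<psi>(1)])
  have \<psi>_bound: "\<And>x. \<bar>\<psi> x\<bar> \<le> N" using \<psi>(2) by blast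
  have int_\<gamma>: "integrable \<gamma> \<phi>" "integrable \<gamma> \<psi>"
    using integrable_bounded_borel[OF G.finite_measure_axioms gam(2)] \<phi>_borel \<phi>_bound \<psi>_borel \<psi>_bound
    by blast+
  have "(\<integral>x. \<phi> x \<partial>\<gamma>) - (\<integral>x. \<psi> x \<partial>\<gamma>) \<le> (\<integral>x. \<bar>\<phi> x - \<psi> x\<bar> \<partial>\<gamma>)"
  proof -
    have "(\<integral>x. \<phi> x \<partial>\<gamma>) - (\<integral>x. \<psi> x \<partial>\<gamma>) = (\<integral>x. \<phi> x - \<psi> x \<partial>\<gamma>)"
      using int_\<gamma> by simp
    also have "\<dots> \<le> (\<integral>x. \<bar>\<phi> x - \<psi> x\<bar> \<partial>\<gamma>)"
      using int_\<gamma> by (intro integral_mono integrable_abs integrable_diff) auto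
    finally show ?thesis .
  qed
  moreover have "ln (\<integral>x. exp (\<psi> x) \<partial>\<rho>)
      \<le> ln (\<integral>x. exp (\<phi> x) \<partial>\<rho>) + exp (2 * N) * (\<integral>x. \<bar>\<phi> x - \<psi> x\<bar> \<partial>\<rho>)"
    using \<psi>_borel rho(2) \<phi> \<phi>_bound \<psi>_bound
    by (intro R.ln_integral_exp_le) (auto intro: borel_measurable_sets_eq_borel)
  moreover have "exp (2 * N) * (\<integral>x. \<bar>\<phi> x - \<psi> x\<bar> \<partial>\<rho>) \<le> exp (2 * N) * \<delta>"
    using \<psi>(3) by simp
  moreover have "\<delta> + exp (2 * N) * \<delta> = \<eta>"
  proof -
    have "0 < 1 + exp (2 * N)" by (simp add: add_pos_pos)
    then have "(1 + exp (2 * N)) * \<delta> = \<eta>" by (simp add: \<delta>_def)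
    then show ?thesis by (simp add: algebra_simps)
  qed
  ultimately have "M < (\<integral>x. \<psi> x \<partial>\<gamma>) - ln (\<integral>x. exp (\<psi> x) \<partial>\<rho>)"
    using \<psi>(4) unfolding \<eta>_def by linarith
  then show ?thesis using that \<psi>(1) \<psi>_bound by blast
qed

lemma rel_ent_le_Liminf_narrow_conv:
  fixes \<rho> \<gamma> :: "'b::euclidean_space measure" and \<gamma>s :: "'i \<Rightarrow> 'b measure"
  assumes rho: "prob_space \<rho>" "sets \<rho> = sets borel" and gam: "prob_space \<gamma>" "sets \<gamma> = sets borel"
    and ev: "\<forall>\<^sub>F i in F. prob_space (\<gamma>s i) \<and> sets (\<gamma>s i) = sets borel"
    and conv: "narrow_conv F \<gamma>s \<gamma>"
  shows "rel_ent \<gamma> \<rho> \<le> Liminf F (\<lambda>i. rel_ent (\<gamma>s i) \<rho>)"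
  unfolding le_Liminf_iff
proof (intro allI impI)
  fix y assume "y < rel_ent \<gamma> \<rho>"
  then obtain M where M: "y < ereal M" "ereal M < rel_ent \<gamma> \<rho>" using ereal_dense2 by blast
  obtain \<psi> B where \<psi>: "continuous_on UNIV \<psi>" "\<And>x. \<bar>\<psi> x\<bar> \<le> B"
      and DV: "M < (\<integral>x. \<psi> x \<partial>\<gamma>) - ln (\<integral>x. exp (\<psi> x) \<partial>\<rho>)"
    using Donsker_Varadhan_approx_continuous[OF rho gam M(2)] by blast
  have \<psi>_borel: "\<psi> \<in> borel_measurable \<rho>"
    by (rule borel_measurable_sets_eq_borel[OF rho(2) borel_measurable_continuous_onI[OF \<psi>(1)]])
  have "bounded (range \<psi>)" using \<psi>(2) unfolding bounded_iff by auto
  then have "((\<lambda>i. \<integral>x. \<psi> x \<partial>\<gamma>s i) \<longlongrightarrow> (\<integral>x. \<psi> x \<partial>\<gamma>)) F"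
    using conv \<psi>(1) unfolding narrow_conv_def by blast
  then have "((\<lambda>i. (\<integral>x. \<psi> x \<partial>\<gamma>s i) - ln (\<integral>x. exp (\<psi> x) \<partial>\<rho>))
      \<longlongrightarrow> (\<integral>x. \<psi> x \<partial>\<gamma>) - ln (\<integral>x. exp (\<psi> x) \<partial>\<rho>)) F"
    by (intro tendsto_intros)
  then have "\<forall>\<^sub>F i in F. M < (\<integral>x. \<psi> x \<partial>\<gamma>s i) - ln (\<integral>x. exp (\<psi> x) \<partial>\<rho>)"
    using DV by (rule order_tendstoD(1))
  then show "\<forall>\<^sub>F i in F. y < rel_ent (\<gamma>s i) \<rho>"
    using ev
  proof eventually_elim
    case (elim i)
    then have "ereal M < ereal ((\<integral>x. \<psi> x \<partial>\<gamma>s i) - ln (\<integral>x. exp (\<psi> x) \<partial>\<rho>))" by simp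
    also have "\<dots> \<le> rel_ent (\<gamma>s i) \<rho>"
      using elim \<psi>_borel \<psi>(2) rho by (intro Donsker_Varadhan_le_rel_ent) auto
    finally show ?case using M(1) by simp
  qed
qed

section \<open>Costs on couplings of compactly supported marginals\<close>

lemma couplings_AE_mem_Times:
  assumes \<gamma>: "\<gamma> \<in> couplings \<mu> \<nu>"
    and K1: "closed K1" "emeasure \<mu> (space \<mu> - K1) = 0"
    and K2: "closed K2" "emeasure \<nu> (space \<nu> - K2) = 0"
  shows "AE z in \<gamma>. z \<in> K1 \<times> K2"
proof -
  have sets: "sets \<gamma> = sets borel" and marg: "distr \<gamma> borel fst = \<mu>" "distr \<gamma> borel snd = \<nu>"
    using \<gamma> by (auto simp: couplings_def)
  have fst: "fst \<in> measurable \<gamma> borel" and snd: "snd \<in> measurable \<gamma> borel"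
    unfolding measurable_cong_sets[OF sets refl]
    by (intro borel_measurable_continuous_onI continuous_intros)+
  have sets_marg: "sets \<mu> = sets borel" "sets \<nu> = sets borel" by (simp_all flip: marg)
  then have "space \<mu> - K1 \<in> sets \<mu>" "space \<nu> - K2 \<in> sets \<nu>"
    using borel_open[OF open_Compl[OF K1(1)]] borel_open[OF open_Compl[OF K2(1)]]
    by (simp_all add: sets_eq_imp_space_eq Compl_eq_Diff_UNIV)
  then have null: "space \<mu> - K1 \<in> null_sets \<mu>" "space \<nu> - K2 \<in> null_sets \<nu>"
    using K1(2) K2(2) by (auto simp: null_sets_def)
  have "AE x in \<mu>. x \<in> K1" by (rule AE_I'[OF null(1)]) auto
  moreover have "AE x in \<nu>. x \<in> K2" by (rule AE_I'[OF null(2)]) auto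
  ultimately have "AE z in \<gamma>. fst z \<in> K1" "AE z in \<gamma>. snd z \<in> K2"
    unfolding marg[symmetric] by (auto dest: AE_distrD[OF fst] AE_distrD[OF snd])
  then show ?thesis by eventually_elim (simp add: mem_Times_iff)
qed

text \<open>Every coupling is carried by the product of the supports, on which \<open>c\<close> is bounded.\<close>

lemma bounded_continuous_cost_on_couplings:
  fixes c :: "'a::euclidean_space \<times> 'a \<Rightarrow> real"
  assumes c: "continuous_on UNIV c"
    and mu_supp: "\<exists>K. compact K \<and> emeasure \<mu> (space \<mu> - K) = 0"
    and nu_supp: "\<exists>K. compact K \<and> emeasure \<nu> (space \<nu> - K) = 0"
  obtains c' where "continuous_on UNIV c'" "bounded (range c')"
    "\<And>\<gamma>. \<gamma> \<in> couplings \<mu> \<nu> \<Longrightarrow> (\<integral>z. c z \<partial>\<gamma>) = (\<integral>z. c' z \<partial>\<gamma>)"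
proof -
  obtain K1 K2 where K1: "compact K1" "emeasure \<mu> (space \<mu> - K1) = 0"
    and K2: "compact K2" "emeasure \<nu> (space \<nu> - K2) = 0"
    using mu_supp nu_supp by blast
  have "compact (c ` (K1 \<times> K2))"
    by (rule compact_continuous_image[OF continuous_on_subset[OF c] compact_Times[OF K1(1) K2(1)]]) simp
  then obtain B where B: "0 \<le> B" "\<And>z. z \<in> K1 \<times> K2 \<Longrightarrow> \<bar>c z\<bar> \<le> B"
    unfolding compact_eq_bounded_closed bounded_iff by (metis abs_ge_zero image_eqI order_trans real_norm_def)
  define c' where "c' z = max (- B) (min B (c z))" for z
  have "continuous_on UNIV c'" unfolding c'_def using c by (intro continuous_intros)
  moreover have "bounded (range c')" unfolding bounded_iff c'_def using B(1) by (auto intro!: exI[of _ B])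
  moreover have "(\<integral>z. c z \<partial>\<gamma>) = (\<integral>z. c' z \<partial>\<gamma>)" if \<gamma>: "\<gamma> \<in> couplings \<mu> \<nu>" for \<gamma>
  proof (rule integral_cong_AE)
    have "sets \<gamma> = sets borel" using \<gamma> by (simp add: couplings_def)
    then show "c \<in> borel_measurable \<gamma>" "c' \<in> borel_measurable \<gamma>"
      using \<open>continuous_on UNIV c'\<close> c
      by (auto intro: borel_measurable_sets_eq_borel borel_measurable_continuous_onI)
    show "AE z in \<gamma>. c z = c' z"
      using couplings_AE_mem_Times[OF \<gamma> compact_imp_closed[OF K1(1)] K1(2) compact_imp_closed[OF K2(1)] K2(2)]
      by eventually_elim (use B(2) in \<open>force simp: c'_def\<close>)
  qed
  ultimately show ?thesis using that by blast
qed

lemma ot_cost_le_integral: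
  fixes c :: "'a::euclidean_space \<times> 'a \<Rightarrow> real"
  assumes c: "continuous_on UNIV c"
    and mu_supp: "\<exists>K. compact K \<and> emeasure \<mu> (space \<mu> - K) = 0"
    and nu_supp: "\<exists>K. compact K \<and> emeasure \<nu> (space \<nu> - K) = 0"
    and \<gamma>: "\<gamma> \<in> couplings \<mu> \<nu>"
  shows "ot_cost c \<mu> \<nu> \<le> (\<integral>z. c z \<partial>\<gamma>)"
proof -
  obtain c' where c': "continuous_on UNIV c'" "bounded (range c')"
    and c_eq: "\<And>\<gamma>. \<gamma> \<in> couplings \<mu> \<nu> \<Longrightarrow> (\<integral>z. c z \<partial>\<gamma>) = (\<integral>z. c' z \<partial>\<gamma>)"
    using bounded_continuous_cost_on_couplings[OF c mu_supp nu_supp] by blast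
  obtain B where B: "\<And>z. \<bar>c' z\<bar> \<le> B" using c'(2) unfolding bounded_iff by auto
  have "- B \<le> (\<integral>z. c z \<partial>\<delta>)" if \<delta>: "\<delta> \<in> couplings \<mu> \<nu>" for \<delta>
  proof -
    interpret prob_space \<delta> using \<delta> by (simp add: couplings_def)
    have "sets \<delta> = sets borel" using \<delta> by (simp add: couplings_def)
    then have "integrable \<delta> c'"
      using borel_measurable_continuous_onI[OF c'(1)] B
      by (rule integrable_bounded_borel[OF finite_measure_axioms])
    then have "(\<integral>z. - B \<partial>\<delta>) \<le> (\<integral>z. c' z \<partial>\<delta>)"
    proof (rule integral_mono[rotated])
      show "- B \<le> c' z" for z using B[of z] by linarith
    qed simp
    then show ?thesis using c_eq[OF \<delta>] by (simp add: prob_space)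
  qed
  then have "bdd_below ((\<lambda>\<delta>. \<integral>z. c z \<partial>\<delta>) ` couplings \<mu> \<nu>)" by (intro bdd_belowI2) auto
  then show ?thesis unfolding ot_cost_def by (rule cINF_lower[OF _ \<gamma>])
qed

lemma tendsto_integral_cost_narrow_conv:
  fixes c :: "'a::euclidean_space \<times> 'a \<Rightarrow> real"
  assumes c: "continuous_on UNIV c"
    and mu_supp: "\<exists>K. compact K \<and> emeasure \<mu> (space \<mu> - K) = 0"
    and nu_supp: "\<exists>K. compact K \<and> emeasure \<nu> (space \<nu> - K) = 0"
    and \<gamma>: "\<gamma> \<in> couplings \<mu> \<nu>" and ev: "\<forall>\<^sub>F i in F. \<gamma>s i \<in> couplings \<mu> \<nu>"
    and conv: "narrow_conv F \<gamma>s \<gamma>"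
  shows "((\<lambda>i. \<integral>z. c z \<partial>\<gamma>s i) \<longlongrightarrow> (\<integral>z. c z \<partial>\<gamma>)) F"
proof -
  obtain c' where c': "continuous_on UNIV c'" "bounded (range c')"
    and c_eq: "\<And>\<gamma>. \<gamma> \<in> couplings \<mu> \<nu> \<Longrightarrow> (\<integral>z. c z \<partial>\<gamma>) = (\<integral>z. c' z \<partial>\<gamma>)"
    using bounded_continuous_cost_on_couplings[OF c mu_supp nu_supp] by blast
  have "\<forall>\<^sub>F i in F. (\<integral>z. c' z \<partial>\<gamma>s i) = (\<integral>z. c z \<partial>\<gamma>s i)"
    using ev by eventually_elim (simp add: c_eq)
  moreover have "((\<lambda>i. \<integral>z. c' z \<partial>\<gamma>s i) \<longlongrightarrow> (\<integral>z. c z \<partial>\<gamma>)) F"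
    using conv c' c_eq[OF \<gamma>] unfolding narrow_conv_def by simp
  ultimately show ?thesis by (simp only: tendsto_cong)
qed

lemma tendsto_divide_add_nonneg_PInf:
  fixes f :: "real \<Rightarrow> real" and g :: "real \<Rightarrow> ereal"
  assumes f: "(f \<longlongrightarrow> d) (at_right 0)" and d: "0 < d"
    and g: "\<forall>\<^sub>F e in at_right 0. 0 \<le> g e"
  shows "((\<lambda>e. ereal (f e / e) + g e) \<longlongrightarrow> \<infinity>) (at_right 0)"
  unfolding tendsto_PInfty
proof
  fix r :: real
  have "LIM e at_right 0. f e * inverse e :> at_top"
    by (rule filterlim_tendsto_pos_mult_at_top[OF f d filterlim_inverse_at_top_right])
  then have "\<forall>\<^sub>F e in at_right 0. r + 1 \<le> f e * inverse e" unfolding filterlim_at_top by blast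
  then show "\<forall>\<^sub>F e in at_right 0. ereal r < ereal (f e / e) + g e"
    using g
  proof eventually_elim
    case (elim e)
    then have "ereal r < ereal (f e / e)" by (simp add: divide_inverse)
    also have "\<dots> \<le> ereal (f e / e) + g e" using elim(2) by (rule add_increasing2) simp
    finally show ?case .
  qed
qed

section \<open>\<open>\<Gamma>\<close>-convergence of the entropic penalization\<close>

lemma Liminf_penalized_rel_ent_ge:
  fixes c :: "'a::euclidean_space \<times> 'a \<Rightarrow> real" and \<gamma>s :: "real \<Rightarrow> ('a \<times> 'a) measure"
  assumes c: "continuous_on UNIV c"
    and mu_supp: "\<exists>K. compact K \<and> emeasure \<mu> (space \<mu> - K) = 0"
    and nu_supp: "\<exists>K. compact K \<and> emeasure \<nu> (space \<nu> - K) = 0"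
    and \<rho>: "prob_space \<rho>" "sets \<rho> = sets borel"
    and \<gamma>: "\<gamma> \<in> couplings \<mu> \<nu>" and ev: "\<forall>\<^sub>F e in at_right 0. \<gamma>s e \<in> couplings \<mu> \<nu>"
    and conv: "narrow_conv (at_right 0) \<gamma>s \<gamma>"
  shows "(if \<gamma> \<in> opt_couplings c \<mu> \<nu> then rel_ent \<gamma> \<rho> else \<infinity>)
    \<le> Liminf (at_right 0) (\<lambda>e. ereal (((\<integral>z. c z \<partial>\<gamma>s e) - ot_cost c \<mu> \<nu>) / e) + rel_ent (\<gamma>s e) \<rho>)"
proof -
  have coupling: "prob_space \<delta> \<and> sets \<delta> = sets borel" if "\<delta> \<in> couplings \<mu> \<nu>" for \<delta>
    using that by (simp add: couplings_def)
  have ev_coupling: "\<forall>\<^sub>F e in at_right 0. prob_space (\<gamma>s e) \<and> sets (\<gamma>s e) = sets borel"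
    using ev by eventually_elim (rule coupling)
  have ent_nonneg: "\<forall>\<^sub>F e in at_right 0. 0 \<le> rel_ent (\<gamma>s e) \<rho>"
    using ev_coupling by eventually_elim (use \<rho> in \<open>simp add: rel_ent_nonneg\<close>)
  have ot_cost_le: "ot_cost c \<mu> \<nu> \<le> (\<integral>z. c z \<partial>\<delta>)" if "\<delta> \<in> couplings \<mu> \<nu>" for \<delta>
    by (rule ot_cost_le_integral[OF c mu_supp nu_supp that])
  show ?thesis
  proof (cases "\<gamma> \<in> opt_couplings c \<mu> \<nu>")
    case True
    have "\<forall>\<^sub>F e in at_right 0. 0 \<le> ((\<integral>z. c z \<partial>\<gamma>s e) - ot_cost c \<mu> \<nu>) / e"
      using ev eventually_at_right_less[of 0] by eventually_elim (use ot_cost_le in simp)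
    then have "Liminf (at_right 0) (\<lambda>e. rel_ent (\<gamma>s e) \<rho>)
        \<le> Liminf (at_right 0) (\<lambda>e. ereal (((\<integral>z. c z \<partial>\<gamma>s e) - ot_cost c \<mu> \<nu>) / e) + rel_ent (\<gamma>s e) \<rho>)"
      by (intro Liminf_mono) (simp add: eventually_mono add_increasing)
    with rel_ent_le_Liminf_narrow_conv[OF \<rho> conjunct1[OF coupling[OF \<gamma>]] conjunct2[OF coupling[OF \<gamma>]]
        ev_coupling conv]
    show ?thesis using True by simp
  next
    case False
    then have "0 < (\<integral>z. c z \<partial>\<gamma>) - ot_cost c \<mu> \<nu>"
      using ot_cost_le[OF \<gamma>] \<gamma> by (auto simp: opt_couplings_def)
    moreover have "((\<lambda>e. (\<integral>z. c z \<partial>\<gamma>s e) - ot_cost c \<mu> \<nu>) \<longlongrightarrow> (\<integral>z. c z \<partial>\<gamma>) - ot_cost c \<mu> \<nu>) (at_right 0)"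
      by (intro tendsto_diff tendsto_const tendsto_integral_cost_narrow_conv[OF c mu_supp nu_supp \<gamma> ev conv])
    ultimately have "((\<lambda>e. ereal (((\<integral>z. c z \<partial>\<gamma>s e) - ot_cost c \<mu> \<nu>) / e) + rel_ent (\<gamma>s e) \<rho>) \<longlongrightarrow> \<infinity>) (at_right 0)"
      using ent_nonneg by (intro tendsto_divide_add_nonneg_PInf)
    then show ?thesis using False by (simp add: lim_imp_Liminf)
  qed
qed

lemma Limsup_penalized_rel_ent_const_le:
  "Limsup (at_right 0) (\<lambda>e. ereal (((\<integral>z. c z \<partial>\<gamma>) - ot_cost c \<mu> \<nu>) / e) + rel_ent \<gamma> \<rho>)
    \<le> (if \<gamma> \<in> opt_couplings c \<mu> \<nu> then rel_ent \<gamma> \<rho> else \<infinity>)"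
proof (cases "\<gamma> \<in> opt_couplings c \<mu> \<nu>")
  case True
  then show ?thesis by (simp add: opt_couplings_def Limsup_const)
qed simp

theorem mainTheorem5:
  fixes c :: "'a::euclidean_space \<times> 'a \<Rightarrow> real"
    and \<mu> \<nu> :: "'a measure"
  assumes c_cont: "continuous_on UNIV c"
    and mu_prob: "prob_space \<mu>" and mu_sets: "sets \<mu> = sets borel"
    and nu_prob: "prob_space \<nu>" and nu_sets: "sets \<nu> = sets borel"
    and mu_supp: "\<exists>K. compact K \<and> emeasure \<mu> (space \<mu> - K) = 0"
    and nu_supp: "\<exists>K. compact K \<and> emeasure \<nu> (space \<nu> - K) = 0"
    and mu_ac: "absolutely_continuous lborel \<mu>"
    and nu_ac: "absolutely_continuous lborel \<nu>"
    and mu_ent: "(\<integral>\<^sup>+ x. ennreal (ln (enn2real (RN_deriv lborel \<mu> x))) \<partial>\<mu>) < \<infinity>"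
    and nu_ent: "(\<integral>\<^sup>+ x. ennreal (ln (enn2real (RN_deriv lborel \<nu> x))) \<partial>\<nu>) < \<infinity>"
  shows "gamma_conv_narrow (couplings \<mu> \<nu>)
           (\<lambda>e \<gamma>. ereal (((\<integral> z. c z \<partial>\<gamma>) - ot_cost c \<mu> \<nu>) / e) + rel_ent \<gamma> (\<mu> \<Otimes>\<^sub>M \<nu>))
           (\<lambda>\<gamma>. if \<gamma> \<in> opt_couplings c \<mu> \<nu> then rel_ent \<gamma> (\<mu> \<Otimes>\<^sub>M \<nu>) else \<infinity>)"
proof -
  have \<rho>: "prob_space (\<mu> \<Otimes>\<^sub>M \<nu>)" "sets (\<mu> \<Otimes>\<^sub>M \<nu>) = sets borel"
    using prob_space_pair[OF mu_prob nu_prob] sets_pair_measure_cong[OF mu_sets nu_sets] borel_prod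
    by metis+
  show ?thesis
    unfolding gamma_conv_narrow_def
  proof (intro conjI ballI allI impI)
    fix \<gamma> and \<gamma>s :: "real \<Rightarrow> ('a \<times> 'a) measure"
    assume "\<gamma> \<in> couplings \<mu> \<nu>" "\<forall>\<^sub>F e in at_right 0. \<gamma>s e \<in> couplings \<mu> \<nu>"
      "narrow_conv (at_right 0) \<gamma>s \<gamma>"
    then show "(if \<gamma> \<in> opt_couplings c \<mu> \<nu> then rel_ent \<gamma> (\<mu> \<Otimes>\<^sub>M \<nu>) else \<infinity>)
        \<le> Liminf (at_right 0) (\<lambda>e. ereal (((\<integral>z. c z \<partial>\<gamma>s e) - ot_cost c \<mu> \<nu>) / e) + rel_ent (\<gamma>s e) (\<mu> \<Otimes>\<^sub>M \<nu>))"
      by (rule Liminf_penalized_rel_ent_ge[OF c_cont mu_supp nu_supp \<rho>])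
  next
    fix \<gamma> assume "\<gamma> \<in> couplings \<mu> \<nu>"
    then show "\<exists>\<gamma>s. (\<forall>e>0. \<gamma>s e \<in> couplings \<mu> \<nu>) \<and> narrow_conv (at_right 0) \<gamma>s \<gamma> \<and>
        Limsup (at_right 0) (\<lambda>e. ereal (((\<integral>z. c z \<partial>\<gamma>s e) - ot_cost c \<mu> \<nu>) / e) + rel_ent (\<gamma>s e) (\<mu> \<Otimes>\<^sub>M \<nu>))
          \<le> (if \<gamma> \<in> opt_couplings c \<mu> \<nu> then rel_ent \<gamma> (\<mu> \<Otimes>\<^sub>M \<nu>) else \<infinity>)"
    proof (intro exI[of _ "\<lambda>_. \<gamma>"] conjI)
      show "\<forall>e>0. \<gamma> \<in> couplings \<mu> \<nu>" using \<open>\<gamma> \<in> couplings \<mu> \<nu>\<close> by simp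
      show "narrow_conv (at_right 0) (\<lambda>_. \<gamma>) \<gamma>" by (simp add: narrow_conv_def)
    qed (rule Limsup_penalized_rel_ent_const_le)
  qed
qed

end
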